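(* Let $A=\mathrm{diag}(\Lambda_{11},\dots,\Lambda_{kk})\in\mathbb R^{d\times d}$ be a block diagonal matrix of the form described in the context satisfying condition (C). Let $V\in\mathcal G(s,d)$, let $W$ be a block column echelon basis of $V$, and let $V^\infty=\mathrm{range}(W^\infty)$ with $W^\infty$ as defined in the context. Then $V^\infty\in\mathcal G(s,d)$ and $$\lim_{t\to\infty}\big\|P_{e^{tA}V}-P_{e^{tA}V^\infty}\big\|=0.$$
   Context: Block structure: $d=d_1+\dots+d_k$ with $d_j\in\{1,2\}$; $\Lambda_{jj}=\beta_j\in\mathbb R$ if $d_j=1$, and $\Lambda_{jj}=\begin{pmatrix}\beta_j&-\omega_j/\rho_j\\ \rho_j\omega_j&\beta_j\end{pmatrix}$ with $\omega_j>0$, $0<\rho_j\le1$ if $d_j=2$; moreover $\beta_1\ge\beta_2\ge\dots\ge\beta_k$. Let $J_{\mathbb C}=\{j\in\{1,\dots,k\}:d_j=2\}$. Condition (C): $\beta_j\neq\beta_\nu$ for all $j\in J_{\mathbb C}$ and all $\nu\in\{1,\dots,k\}$, $\nu\ne j$. Block column echelon basis: the rows of a matrix $W\in\mathbb R^{d\times s}$ are partitioned into consecutive blocks of sizes $d_1,\dots,d_k$. A block column echelon basis of $V\in\mathcal G(s,d)$ is a $W\in\mathbb R^{d\times s}$ with $\mathrm{range}(W)=V$ whose columns are partitioned into consecutive groups of sizes $b_1,\dots,b_r\in\{1,2\}$, $\sum_jb_j=s$, such that, writing $W_{ij}\in\mathbb R^{d_i\times b_j}$ for the resulting blocks, there are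 indices $0\le k_1<k_2<\dots<k_r<k$ with $W_{ij}=0$ for $i\le k_j$ and $\mathrm{rank}(W_{k_j+1,j})=b_j$ (so $b_j=1$ whenever $d_{k_j+1}=1$). Every $V\in\mathcal G(s,d)$ admits such a basis. For $j=1,\dots,r$ let $\ell_j\ge1$ be maximal with $k_j+\ell_j\le k$ and $\beta_{k_j+1}=\dots=\beta_{k_j+\ell_j}$. Define $W^\infty\in\mathbb R^{d\times s}$ blockwise by $W^\infty_{ij}=W_{ij}$ if $k_j+1\le i\le k_j+\ell_j$ and $W^\infty_{ij}=0$ otherwise. $P_U$ denotes the orthogonal projection onto a subspace $U$, $\|\cdot\|$ the spectral norm, $\mathcal G(s,d)$ the Grassmannian of $s$-dimensional subspaces of $\mathbb R^d$. *)

theory Defs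
  imports "HOL-Analysis.Analysis"
begin

(* Coordinates of R^d are modelled by a finite type 'n together with a
   bijection idx :: 'n => nat onto {0..<CARD('n)} fixing the ordering of
   coordinates (0-based). Blocks are indexed 1..k, column groups 1..r. *)

(* 0-based offset of the j-th (1-based) block, for block sizes dz *)
definition boff :: "(nat \<Rightarrow> nat) \<Rightarrow> nat \<Rightarrow> nat" where
  "boff dz j = (\<Sum>i\<in>{1..<j}. dz i)"

definition inblk :: "(nat \<Rightarrow> nat) \<Rightarrow> nat \<Rightarrow> nat \<Rightarrow> bool" where
  "inblk dz j r \<longleftrightarrow> boff dz j \<le> r \<and> r < boff dz j + dz j"

definition blockA ::
  "('n::finite \<Rightarrow> nat) \<Rightarrow> nat \<Rightarrow> (nat \<Rightarrow> nat) \<Rightarrow> (nat \<Rightarrow> real) \<Rightarrow> (nat \<Rightarrow> real)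
     \<Rightarrow> (nat \<Rightarrow> real) \<Rightarrow> real^'n^'n" where
  "blockA idx k dz \<beta> \<omega> \<rho> = (\<chi> p q.
     (\<Sum>j\<in>{1..k}. if inblk dz j (idx p) \<and> inblk dz j (idx q) then
        (let a = idx p - boff dz j; b = idx q - boff dz j in
          if a = b then \<beta> j
          else if a = 0 \<and> b = 1 then - \<omega> j / \<rho> j
          else if a = 1 \<and> b = 0 then \<rho> j * \<omega> j
          else 0)
      else 0))"

fun mpow :: "real^'n^'n \<Rightarrow> nat \<Rightarrow> real^'n^'n" where
  "mpow M 0 = mat 1"
| "mpow M (Suc n) = M ** mpow M n"

definition mexp :: "real^'n^'n \<Rightarrow> real^'n^'n" where
  "mexp M = (\<Sum>n. (1 / fact n) *\<^sub>R mpow M n)"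

definition oproj :: "('a::real_inner) set \<Rightarrow> 'a \<Rightarrow> 'a" where
  "oproj U x = (THE y. y \<in> U \<and> (\<forall>u\<in>U. (x - y) \<bullet> u = 0))"

definition grassmannian :: "nat \<Rightarrow> ('a::euclidean_space) set set" where
  "grassmannian s = {V. subspace V \<and> dim V = s}"

(* column c (0-based, nat => real^'n) of W restricted to the rows of block i
   (other entries set to 0): the nonzero part is exactly the block W_ij column *)
definition rowrestr :: "('n::finite \<Rightarrow> nat) \<Rightarrow> (nat \<Rightarrow> nat) \<Rightarrow> nat \<Rightarrow> real^'n \<Rightarrow> real^'n" where
  "rowrestr idx dz i v = (\<chi> p. if inblk dz i (idx p) then v $ p else 0)"

(* rank of the block W_{i,j} whose columns are c0, ..., c0+m-1:
   the dimension of the span of its columns *)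
definition rank_block :: "('n::finite \<Rightarrow> nat) \<Rightarrow> (nat \<Rightarrow> nat) \<Rightarrow> nat \<Rightarrow> (nat \<Rightarrow> real^'n)
     \<Rightarrow> nat \<Rightarrow> nat \<Rightarrow> nat" where
  "rank_block idx dz i w c0 m = dim (span ((\<lambda>c. rowrestr idx dz i (w c)) ` {c0..<c0+m}))"

(* W (columns w 0, ..., w (s-1)) is a block column echelon basis of V, with
   column group sizes b 1..b r and indices kk 1..kk r *)
definition block_col_echelon ::
  "('n::finite \<Rightarrow> nat) \<Rightarrow> nat \<Rightarrow> (nat \<Rightarrow> nat) \<Rightarrow> (real^'n) set \<Rightarrow> nat \<Rightarrow> (nat \<Rightarrow> real^'n)
     \<Rightarrow> nat \<Rightarrow> (nat \<Rightarrow> nat) \<Rightarrow> (nat \<Rightarrow> nat) \<Rightarrow> bool" where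
  "block_col_echelon idx k dz V s w r b kk \<longleftrightarrow>
     span (w ` {..<s}) = V \<and>
     (\<forall>j\<in>{1..r}. b j \<in> {1,2}) \<and> (\<Sum>j\<in>{1..r}. b j) = s \<and>
     (\<forall>j\<in>{1..r}. kk j < k) \<and> (\<forall>j\<in>{1..<r}. kk j < kk (Suc j)) \<and>
     (\<forall>j\<in>{1..r}. \<forall>i\<in>{1..kk j}. \<forall>c\<in>{boff b j..<boff b j + b j}.
         rowrestr idx dz i (w c) = 0) \<and>
     (\<forall>j\<in>{1..r}. rank_block idx dz (Suc (kk j)) w (boff b j) (b j) = b j)"

definition ell :: "nat \<Rightarrow> (nat \<Rightarrow> real) \<Rightarrow> (nat \<Rightarrow> nat) \<Rightarrow> nat \<Rightarrow> nat" where
  "ell k \<beta> kk j = (GREATEST l. 1 \<le> l \<and> kk j + l \<le> k \<and>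
       (\<forall>i\<in>{Suc (kk j)..kk j + l}. \<beta> i = \<beta> (Suc (kk j))))"

definition winf ::
  "('n::finite \<Rightarrow> nat) \<Rightarrow> nat \<Rightarrow> (nat \<Rightarrow> nat) \<Rightarrow> (nat \<Rightarrow> real) \<Rightarrow> (nat \<Rightarrow> real^'n)
     \<Rightarrow> nat \<Rightarrow> (nat \<Rightarrow> nat) \<Rightarrow> (nat \<Rightarrow> nat) \<Rightarrow> nat \<Rightarrow> real^'n" where
  "winf idx k dz \<beta> w r b kk c = (\<Sum>j\<in>{1..r}.
     if boff b j \<le> c \<and> c < boff b j + b j then
       (\<chi> p. if (\<exists>i\<in>{Suc (kk j)..kk j + ell k \<beta> kk j}. inblk dz i (idx p)) then w c $ p else 0)
     else 0)"

end

theory Submission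
  imports Defs
begin

text \<open>On the \<open>i\<close>-th block, \<open>e\<^sup>t\<^sup>A\<close> is \<open>e\<^sup>t\<^sup>\<beta>\<^sup>i\<close> times a map which, uniformly in \<open>t\<close>, is
  bounded with bounded inverse (the identity, or a rotation-like map on a \<open>2 \<times> 2\<close> block).
  Let \<open>\<gamma>\<^sub>j\<close> be the value of \<open>\<beta>\<close> on the leading block \<open>k\<^sub>j + 1\<close> of the \<open>j\<close>-th column group.
  Columns of group \<open>j\<close> vanish on the blocks \<open>\<le> k\<^sub>j\<close>, and \<open>W - W\<^sup>\<infinity>\<close> keeps only their
  entries on blocks with \<open>\<beta> < \<gamma>\<^sub>j\<close>. Put \<open>X\<^sub>t(a) = \<Sum>\<^sub>j \<Sum>\<^sub>c |a\<^sub>c| e\<^sup>t\<^sup>\<gamma>\<^sup>j\<close>, the inner sum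
  running over group \<open>j\<close>. Since the leading blocks have full rank and later groups vanish
  on earlier leading blocks, an induction over the groups gives \<open>X\<^sub>t(a) \<le> C \<parallel>e\<^sup>t\<^sup>A W a\<parallel>\<close>,
  and likewise for \<open>W\<^sup>\<infinity>\<close>; at \<open>t = 0\<close> this makes the columns of \<open>W\<^sup>\<infinity>\<close> independent.
  On the other hand \<open>\<parallel>e\<^sup>t\<^sup>A (W - W\<^sup>\<infinity>) a\<parallel> \<le> \<epsilon>(t) X\<^sub>t(a)\<close> with \<open>\<epsilon>(t) \<rightarrow> 0\<close>. Hence
  \<open>e\<^sup>t\<^sup>A V\<close> and \<open>e\<^sup>t\<^sup>A V\<^sup>\<infinity>\<close> are mutually \<open>C \<epsilon>(t)\<close>-close (relative to norms), and orthogonal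
  projections onto mutually \<open>\<theta>\<close>-close subspaces differ by at most \<open>2\<theta>\<close> in norm.\<close>

lemma boff_Suc: "1 \<le> j \<Longrightarrow> boff f (Suc j) = boff f j + f j"
  unfolding boff_def by (simp add: atLeastLessThanSuc add.commute)

lemma boff_mono: "1 \<le> i \<Longrightarrow> i \<le> j \<Longrightarrow> boff f i \<le> boff f j"
  unfolding boff_def by (rule sum_mono2) auto

lemma boff_add_le: "1 \<le> i \<Longrightarrow> i < j \<Longrightarrow> boff f i + f i \<le> boff f j"
  using boff_mono[of "Suc i" j f] boff_Suc[of i f] by simp

lemma boff_Suc_eq_sum: "boff f (Suc m) = (\<Sum>j\<in>{1..m}. f j)"
  unfolding boff_def by (simp add: atLeastLessThanSuc_atLeastAtMost)

lemma boff_add_le_Suc: "j \<in> {1..m} \<Longrightarrow> boff f j + f j \<le> boff f (Suc m)"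
  using boff_add_le[of j m f] boff_Suc[of m f] by (cases "j = m") auto

lemma inblk_exists: "r < boff f (Suc m) \<Longrightarrow> \<exists>i\<in>{1..m}. inblk f i r"
proof (induction m)
  case 0
  then show ?case by (simp add: boff_def)
next
  case (Suc m)
  show ?case
  proof (cases "r < boff f (Suc m)")
    case True
    then show ?thesis using Suc.IH by auto
  next
    case False
    then have "inblk f (Suc m) r"
      using Suc.prems boff_Suc[of "Suc m" f] unfolding inblk_def by simp
    then show ?thesis by auto
  qed
qed

lemma inblk_unique: "inblk f i r \<Longrightarrow> inblk f i' r \<Longrightarrow> 1 \<le> i \<Longrightarrow> 1 \<le> i' \<Longrightarrow> i = i'"
  using boff_add_le[of i i' f] boff_add_le[of i' i f] unfolding inblk_def
  by (cases i i' rule: linorder_cases) auto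

lemma sum_lessThan_boff:
  "(\<Sum>c<boff f (Suc m). g c) = (\<Sum>j\<in>{1..m}. \<Sum>c\<in>{boff f j..<boff f j + f j}. g c)"
proof (induction m)
  case 0
  then show ?case by (simp add: boff_def)
next
  case (Suc m)
  have "(\<Sum>c<boff f (Suc (Suc m)). g c)
      = (\<Sum>c<boff f (Suc m). g c) + (\<Sum>c\<in>{boff f (Suc m)..<boff f (Suc m) + f (Suc m)}. g c)"
    by (simp add: boff_Suc sum.atLeastLessThan_concat[symmetric] lessThan_atLeast0)
  then show ?case using Suc.IH by simp
qed

section \<open>Orthogonal projections\<close>

lemma oproj_char:
  fixes U :: "'a::euclidean_space set"
  assumes U: "subspace U"
  shows "oproj U x \<in> U \<and> (\<forall>u\<in>U. (x - oproj U x) \<bullet> u = 0)"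
proof -
  obtain y z where y: "y \<in> span U" and z: "\<And>w. w \<in> span U \<Longrightarrow> orthogonal z w" and xyz: "x = y + z"
    using orthogonal_subspace_decomp_exists[of U x] by blast
  have sU: "span U = U" using U by (rule span_eq_iff[THEN iffD2])
  have yU: "y \<in> U" using y sU by simp
  have zo: "(x - y) \<bullet> u = 0" if "u \<in> U" for u
    using z[of u] that sU xyz unfolding orthogonal_def by simp
  have uniq: "y' = y" if "y' \<in> U" "\<forall>u\<in>U. (x - y') \<bullet> u = 0" for y'
  proof -
    have d: "y - y' \<in> U" using that(1) yU U by (simp add: subspace_diff)
    have "(y - y') \<bullet> (y - y') = (x - y') \<bullet> (y - y') - (x - y) \<bullet> (y - y')"
      by (simp add: inner_diff_left)
    then show ?thesis using that(2) d zo[OF d] by simp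
  qed
  have "oproj U x = y"
    unfolding oproj_def using yU zo uniq by (intro the_equality) blast+
  then show ?thesis using yU zo by simp
qed

lemma oproj_in: "subspace (U::'a::euclidean_space set) \<Longrightarrow> oproj U x \<in> U"
  using oproj_char[of U x] by (rule conjunct1)

lemma oproj_orth: "subspace (U::'a::euclidean_space set) \<Longrightarrow> u \<in> U \<Longrightarrow> (x - oproj U x) \<bullet> u = 0"
  using oproj_char[of U x] by simp

lemma oproj_unique:
  fixes U :: "'a::euclidean_space set"
  assumes U: "subspace U" and y: "y \<in> U" and o: "\<And>u. u \<in> U \<Longrightarrow> (x - y) \<bullet> u = 0"
  shows "oproj U x = y"
proof -
  have d: "y - oproj U x \<in> U" using oproj_in[OF U] y U by (simp add: subspace_diff)
  have "(y - oproj U x) \<bullet> (y - oproj U x)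
      = (x - oproj U x) \<bullet> (y - oproj U x) - (x - y) \<bullet> (y - oproj U x)"
    by (simp add: inner_diff_left)
  then show ?thesis using o[OF d] oproj_orth[OF U d] by simp
qed

lemma linear_oproj:
  fixes U :: "'a::euclidean_space set"
  assumes U: "subspace U"
  shows "linear (oproj U)"
proof (rule linearI)
  fix x x' :: 'a and c :: real
  show "oproj U (x + x') = oproj U x + oproj U x'"
  proof (rule oproj_unique[OF U])
    show "oproj U x + oproj U x' \<in> U" using oproj_in[OF U] U by (simp add: subspace_add)
    fix u assume u: "u \<in> U"
    have "x + x' - (oproj U x + oproj U x') = (x - oproj U x) + (x' - oproj U x')" by simp
    then show "(x + x' - (oproj U x + oproj U x')) \<bullet> u = 0"
      using oproj_orth[OF U u] by (simp only: inner_add_left)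
  qed
  show "oproj U (c *\<^sub>R x) = c *\<^sub>R oproj U x"
  proof (rule oproj_unique[OF U])
    show "c *\<^sub>R oproj U x \<in> U" using oproj_in[OF U] U by (simp add: subspace_scale)
    fix u assume "u \<in> U"
    then show "(c *\<^sub>R x - c *\<^sub>R oproj U x) \<bullet> u = 0"
      using oproj_orth[OF U] by (simp flip: scaleR_diff_right)
  qed
qed

lemma norm_diff_oproj_pythagoras:
  fixes U :: "'a::euclidean_space set"
  assumes U: "subspace U" and u: "u \<in> U"
  shows "(norm (x - u))\<^sup>2 = (norm (x - oproj U x))\<^sup>2 + (norm (oproj U x - u))\<^sup>2"
proof -
  have "oproj U x - u \<in> U" using oproj_in[OF U] u U by (simp add: subspace_diff)
  then have "orthogonal (x - oproj U x) (oproj U x - u)"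
    unfolding orthogonal_def using oproj_orth[OF U] by blast
  from norm_add_Pythagorean[OF this] show ?thesis by simp
qed

lemma norm_diff_oproj_le:
  fixes U :: "'a::euclidean_space set"
  assumes "subspace U" "u \<in> U"
  shows "norm (x - oproj U x) \<le> norm (x - u)"
  using norm_diff_oproj_pythagoras[OF assms, of x] by (simp add: power2_le_imp_le)

lemma norm_oproj_le:
  fixes U :: "'a::euclidean_space set"
  assumes U: "subspace U"
  shows "norm (oproj U x) \<le> norm x"
  using norm_diff_oproj_pythagoras[OF U subspace_0[OF U], of x] by (simp add: power2_le_imp_le)

lemma norm_diff_oproj_le_norm:
  fixes U :: "'a::euclidean_space set"
  assumes U: "subspace U"
  shows "norm (x - oproj U x) \<le> norm x"
  using norm_diff_oproj_le[OF U subspace_0[OF U], of x] by simp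

text \<open>If every vector of \<open>W\<close> is \<open>\<theta>\<close>-close to \<open>U\<close>, then \<open>P\<^sub>W\<close> is \<open>\<theta>\<close>-small on \<open>U\<^sup>\<perp>\<close>:
  for \<open>p = P\<^sub>W z\<close> and \<open>u \<in> U\<close> near \<open>p\<close> one has \<open>\<parallel>p\<parallel>\<^sup>2 = p \<bullet> z = (p - u) \<bullet> z\<close>.\<close>

lemma norm_oproj_orthogonal_le:
  fixes U W :: "'a::euclidean_space set"
  assumes W: "subspace W" and th: "0 \<le> \<theta>"
    and close: "\<And>w. w \<in> W \<Longrightarrow> \<exists>u\<in>U. norm (w - u) \<le> \<theta> * norm w"
    and orth: "\<And>u. u \<in> U \<Longrightarrow> z \<bullet> u = 0"
  shows "norm (oproj W z) \<le> \<theta> * norm z"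
proof -
  define p where "p = oproj W z"
  have pW: "p \<in> W" unfolding p_def by (rule oproj_in[OF W])
  obtain u where u: "u \<in> U" "norm (p - u) \<le> \<theta> * norm p" using close[OF pW] by blast
  have "(z - p) \<bullet> p = 0" unfolding p_def by (rule oproj_orth[OF W pW[unfolded p_def]])
  then have "p \<bullet> p = p \<bullet> z" unfolding inner_diff_left by (simp add: inner_commute)
  also have "\<dots> = (p - u) \<bullet> z"
    using orth[OF u(1)] by (simp add: inner_diff_left inner_commute[of u z])
  also have "\<dots> \<le> norm (p - u) * norm z" by (rule norm_cauchy_schwarz)
  also have "\<dots> \<le> (\<theta> * norm p) * norm z" using u(2) by (rule mult_right_mono) simp
  also have "\<dots> = norm p * (\<theta> * norm z)" by simp
  finally have "norm p * norm p \<le> norm p * (\<theta> * norm z)" by (simp add: dot_square_norm power2_eq_square)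
  then show ?thesis unfolding p_def[symmetric] using th
    by (cases "norm p = 0") (auto simp: mult_le_cancel_left_pos)
qed

lemma norm_oproj_diff_le:
  fixes U W :: "'a::euclidean_space set"
  assumes U: "subspace U" and W: "subspace W" and th: "0 \<le> \<theta>"
    and closeU: "\<And>u. u \<in> U \<Longrightarrow> \<exists>w\<in>W. norm (u - w) \<le> \<theta> * norm u"
    and closeW: "\<And>w. w \<in> W \<Longrightarrow> \<exists>u\<in>U. norm (w - u) \<le> \<theta> * norm w"
  shows "norm (oproj U x - oproj W x) \<le> 2 * \<theta> * norm x"
proof -
  define y where "y = oproj U x"
  have yU: "y \<in> U" unfolding y_def by (rule oproj_in[OF U])
  have "oproj U x - oproj W x = (y - oproj W y) - oproj W (x - y)"
    using linear_diff[OF linear_oproj[OF W]] unfolding y_def by simp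
  moreover have "norm (y - oproj W y) \<le> \<theta> * norm x"
  proof -
    obtain w where w: "w \<in> W" "norm (y - w) \<le> \<theta> * norm y" using closeU[OF yU] by blast
    have "norm (y - oproj W y) \<le> \<theta> * norm y"
      using norm_diff_oproj_le[OF W w(1), of y] w(2) by linarith
    also have "\<dots> \<le> \<theta> * norm x" unfolding y_def using norm_oproj_le[OF U] th by (rule mult_left_mono)
    finally show ?thesis .
  qed
  moreover have "norm (oproj W (x - y)) \<le> \<theta> * norm x"
  proof -
    have "norm (oproj W (x - y)) \<le> \<theta> * norm (x - y)"
      using norm_oproj_orthogonal_le[OF W th closeW] oproj_orth[OF U] unfolding y_def by blast
    also have "\<dots> \<le> \<theta> * norm x"
      unfolding y_def using norm_diff_oproj_le_norm[OF U] th by (rule mult_left_mono)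
    finally show ?thesis .
  qed
  ultimately show ?thesis using norm_triangle_ineq4[of "y - oproj W y" "oproj W (x - y)"] by simp
qed

lemma onorm_oproj_diff_le:
  fixes U W :: "'a::euclidean_space set"
  assumes "subspace U" "subspace W" "0 \<le> \<theta>"
    and "\<And>u. u \<in> U \<Longrightarrow> \<exists>w\<in>W. norm (u - w) \<le> \<theta> * norm u"
    and "\<And>w. w \<in> W \<Longrightarrow> \<exists>u\<in>U. norm (w - u) \<le> \<theta> * norm w"
  shows "onorm (\<lambda>x. oproj U x - oproj W x) \<le> 2 * \<theta>"
  using norm_oproj_diff_le[OF assms] by (rule onorm_le)

lemma onorm_oproj_diff_nonneg:
  fixes U W :: "'a::euclidean_space set"
  assumes "subspace U" "subspace W"
  shows "0 \<le> onorm (\<lambda>x. oproj U x - oproj W x)"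
  using linear_compose_sub[OF linear_oproj[OF assms(1)] linear_oproj[OF assms(2)]]
  by (intro onorm_pos_le) (simp add: linear_conv_bounded_linear)

section \<open>Coefficient bounds for independent families\<close>

lemma coeff_le_norm_sum:
  fixes f :: "nat \<Rightarrow> 'a::euclidean_space"
  assumes F: "finite F" and inj: "inj_on f F" and ind: "independent (f ` F)" and c: "c \<in> F"
  shows "\<exists>K\<ge>0. \<forall>a. \<bar>a c\<bar> \<le> K * norm (\<Sum>c\<in>F. a c *\<^sub>R f c)"
proof -
  obtain g :: "'a \<Rightarrow> real" where g: "linear g" "\<forall>x\<in>f ` F. g x = (if x = f c then 1 else 0)"
    using linear_independent_extend[OF ind, of "\<lambda>x. if x = f c then 1 else 0"] by blast
  obtain K where K: "K > 0" "\<And>x. norm (g x) \<le> norm x * K"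
    using bounded_linear.pos_bounded[of g] g(1) linear_conv_bounded_linear by blast
  have coord: "g (\<Sum>c\<in>F. a c *\<^sub>R f c) = a c" for a
  proof -
    have "g (\<Sum>c\<in>F. a c *\<^sub>R f c) = (\<Sum>c'\<in>F. a c' * g (f c'))"
      by (simp add: linear_sum[OF g(1)] linear_scale[OF g(1)] o_def)
    also have "\<dots> = (\<Sum>c'\<in>F. if c' = c then a c else 0)"
      by (rule sum.cong) (use g(2) inj c in \<open>auto simp: inj_on_def\<close>)
    finally show ?thesis using c F by simp
  qed
  have "\<bar>a c\<bar> \<le> K * norm (\<Sum>c\<in>F. a c *\<^sub>R f c)" for a
    using K(2)[of "\<Sum>c\<in>F. a c *\<^sub>R f c"] coord[of a] by (simp add: mult.commute)
  then show ?thesis using K(1) by (intro exI[of _ K]) auto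
qed

lemma sum_abs_coeffs_le_norm_sum:
  fixes f :: "nat \<Rightarrow> 'a::euclidean_space"
  assumes F: "finite F" and inj: "inj_on f F" and ind: "independent (f ` F)"
  shows "\<exists>\<mu>>0. \<forall>a. \<mu> * (\<Sum>c\<in>F. \<bar>a c\<bar>) \<le> norm (\<Sum>c\<in>F. a c *\<^sub>R f c)"
proof -
  have "\<forall>c\<in>F. \<exists>K\<ge>0. \<forall>a. \<bar>a c\<bar> \<le> K * norm (\<Sum>c\<in>F. a c *\<^sub>R f c)"
    using coeff_le_norm_sum[OF F inj ind] by blast
  then obtain K where K: "\<forall>c\<in>F. K c \<ge> 0 \<and> (\<forall>a. \<bar>a c\<bar> \<le> K c * norm (\<Sum>c\<in>F. a c *\<^sub>R f c))"
    by (metis bchoice)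
  define M where "M = 1 + (\<Sum>c\<in>F. K c)"
  have "0 \<le> (\<Sum>c\<in>F. K c)" using K by (intro sum_nonneg) auto
  then have M: "M > 0" unfolding M_def by linarith
  have "(\<Sum>c\<in>F. \<bar>a c\<bar>) \<le> M * norm (\<Sum>c\<in>F. a c *\<^sub>R f c)" for a
  proof -
    have "(\<Sum>c\<in>F. \<bar>a c\<bar>) \<le> (\<Sum>c\<in>F. K c) * norm (\<Sum>c\<in>F. a c *\<^sub>R f c)"
      unfolding sum_distrib_right using K by (intro sum_mono) auto
    also have "\<dots> \<le> M * norm (\<Sum>c\<in>F. a c *\<^sub>R f c)" unfolding M_def by (simp add: distrib_right)
    finally show ?thesis .
  qed
  then show ?thesis using M by (intro exI[of _ "1 / M"]) (auto simp: field_simps)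
qed

lemma independent_if_sum_abs_coeffs_le:
  fixes u :: "nat \<Rightarrow> 'a::euclidean_space"
  assumes H: "\<And>a. (\<Sum>c<s. \<bar>a c\<bar>) \<le> D * norm (\<Sum>c<s. a c *\<^sub>R u c)"
  shows "inj_on u {..<s}" and "independent (u ` {..<s})"
proof -
  have coeffs_zero: "a c = 0" if "(\<Sum>c<s. a c *\<^sub>R u c) = 0" "c < s" for a c
  proof -
    have "\<bar>a c\<bar> \<le> (\<Sum>c<s. \<bar>a c\<bar>)" using \<open>c < s\<close> by (intro member_le_sum) auto
    also have "\<dots> \<le> 0" using H[of a] that(1) by simp
    finally show ?thesis by simp
  qed
  show inj: "inj_on u {..<s}"
  proof (rule inj_onI, rule ccontr)
    fix c c' assume c: "c \<in> {..<s}" "c' \<in> {..<s}" "u c = u c'" "c \<noteq> c'"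
    define a where "a x = (if x = c then 1 else if x = c' then - 1 else (0::real))" for x
    have "(\<Sum>x<s. a x *\<^sub>R u x) = (\<Sum>x\<in>{c, c'}. a x *\<^sub>R u x)"
      using c by (intro sum.mono_neutral_right) (auto simp: a_def)
    also have "\<dots> = 0" using c by (simp add: a_def)
    finally have "a c = 0" using coeffs_zero c by blast
    then show False by (simp add: a_def)
  qed
  show "independent (u ` {..<s})"
  proof (rule independent_if_scalars_zero)
    fix f x assume z: "(\<Sum>x\<in>u ` {..<s}. f x *\<^sub>R x) = 0" and x: "x \<in> u ` {..<s}"
    have "(\<Sum>c<s. f (u c) *\<^sub>R u c) = 0" using z sum.reindex[OF inj, of "\<lambda>x. f x *\<^sub>R x"] by simp
    then show "f x = 0" using x coeffs_zero[of "\<lambda>c. f (u c)"] by auto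
  qed simp
qed

lemma span_image_lessThanE:
  fixes u :: "nat \<Rightarrow> 'a::euclidean_space"
  assumes inj: "inj_on u {..<s}" and x: "x \<in> span (u ` {..<s})"
  obtains a where "x = (\<Sum>c<s. a c *\<^sub>R u c)"
proof -
  obtain f where "x = (\<Sum>v\<in>u ` {..<s}. f v *\<^sub>R v)" using x span_finite[of "u ` {..<s}"] by auto
  then have "x = (\<Sum>c<s. f (u c) *\<^sub>R u c)" using sum.reindex[OF inj, of "\<lambda>x. f x *\<^sub>R x"] by simp
  then show ?thesis by (rule that)
qed

section \<open>The matrix exponential\<close>

lemma mpow_Suc_apply: "mpow M (Suc n) *v x = M *v (mpow M n *v (x::real^'n))"
  by (simp add: matrix_vector_mul_assoc[symmetric])

lemma mpow_scaleR_apply: "mpow (t *\<^sub>R M) n *v (x::real^'n) = t ^ n *\<^sub>R (mpow M n *v x)"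
  by (induction n)
    (simp_all add: mpow_Suc_apply scaleR_matrix_vector_assoc[symmetric] matrix_vector_mult_scaleR
      del: mpow.simps(2))

lemma norm_matrix_le_onorm: "norm (P::real^'n^'n) \<le> real CARD('n) * real CARD('n) * onorm ((*v) P)"
proof -
  have "norm P \<le> (\<Sum>i\<in>UNIV. norm (P $ i))"
    unfolding norm_vec_def by (rule L2_set_le_sum) simp
  also have "\<dots> \<le> (\<Sum>i\<in>(UNIV::'n set). \<Sum>j\<in>(UNIV::'n set). onorm ((*v) P))"
    by (intro sum_mono order_trans[OF norm_le_l1_cart] matrix_component_le_onorm)
  finally show ?thesis by simp
qed

lemma onorm_mpow_le: "onorm ((*v) (mpow (M::real^'n^'n) n)) \<le> onorm ((*v) M) ^ n"
proof (induction n)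
  case 0
  have "(*v) (mat 1 :: real^'n^'n) = id" by (rule ext) simp
  then show ?case using onorm_id_le by simp
next
  case (Suc n)
  have "(*v) (mpow M (Suc n)) = (*v) M \<circ> (*v) (mpow M n)"
    by (rule ext) (simp add: mpow_Suc_apply del: mpow.simps(2))
  then have "onorm ((*v) (mpow M (Suc n))) \<le> onorm ((*v) M) * onorm ((*v) (mpow M n))"
    using onorm_compose[of "(*v) M" "(*v) (mpow M n)"] by simp
  also have "\<dots> \<le> onorm ((*v) M) * onorm ((*v) M) ^ n"
    by (intro mult_left_mono Suc.IH onorm_pos_le) simp
  finally show ?case by simp
qed

lemma summable_mexp_series: "summable (\<lambda>n. (1 / fact n) *\<^sub>R mpow (M::real^'n^'n) n)"
proof (rule summable_comparison_test)
  let ?c = "real CARD('n) * real CARD('n)" and ?a = "onorm ((*v) M)"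
  show "\<exists>N. \<forall>n\<ge>N. norm ((1 / fact n) *\<^sub>R mpow M n) \<le> ?c * (?a ^ n /\<^sub>R fact n)"
  proof (intro exI allI impI)
    fix n :: nat
    have "norm (mpow M n) \<le> ?c * ?a ^ n"
      using norm_matrix_le_onorm[of "mpow M n"] onorm_mpow_le[of M n]
      by (auto intro: order_trans mult_left_mono)
    then have "norm (mpow M n) / fact n \<le> ?c * ?a ^ n / fact n"
      by (rule divide_right_mono) simp
    then show "norm ((1 / fact n) *\<^sub>R mpow M n) \<le> ?c * (?a ^ n /\<^sub>R fact n)"
      by (simp add: divide_inverse mult_ac)
  qed
  show "summable (\<lambda>n. ?c * (?a ^ n /\<^sub>R fact n))"
    using exp_converges[of ?a] by (intro summable_mult) (simp add: sums_iff)
qed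

lemma mexp_apply_sums: "(\<lambda>n. (1 / fact n) *\<^sub>R (mpow M n *v y)) sums (mexp M *v (y::real^'n))"
proof -
  have "linear (\<lambda>P::real^'n^'n. P *v y)"
    by (rule linearI) (simp_all add: matrix_vector_mult_add_rdistrib scaleR_matrix_vector_assoc)
  then have "bounded_linear (\<lambda>P::real^'n^'n. P *v y)"
    by (simp add: linear_conv_bounded_linear)
  moreover have "(\<lambda>n. (1 / fact n) *\<^sub>R mpow M n) sums mexp M"
    unfolding mexp_def using summable_mexp_series summable_sums by blast
  ultimately have "(\<lambda>n. ((1 / fact n) *\<^sub>R mpow M n) *v y) sums (mexp M *v y)"
    by (rule bounded_linear.sums)
  then show ?thesis by (simp add: scaleR_matrix_vector_assoc)
qed

lemma mexp_apply_eigenvector: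
  assumes "M *v y = b *\<^sub>R (y::real^'n)"
  shows "mexp (t *\<^sub>R M) *v y = exp (t * b) *\<^sub>R y"
proof -
  have "mpow M n *v y = b ^ n *\<^sub>R y" for n
    by (induction n) (simp_all add: mpow_Suc_apply matrix_vector_mult_scaleR assms del: mpow.simps(2))
  then have "(\<lambda>n. (1 / fact n) *\<^sub>R (mpow (t *\<^sub>R M) n *v y)) = (\<lambda>n. ((t * b) ^ n /\<^sub>R fact n) *\<^sub>R y)"
    by (simp add: mpow_scaleR_apply power_mult_distrib divide_inverse mult.commute)
  moreover have "(\<lambda>n. ((t * b) ^ n /\<^sub>R fact n) *\<^sub>R y) sums (exp (t * b) *\<^sub>R y)"
    by (rule sums_scaleR_left) (rule exp_converges)
  ultimately have "(\<lambda>n. (1 / fact n) *\<^sub>R (mpow (t *\<^sub>R M) n *v y)) sums (exp (t * b) *\<^sub>R y)"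
    by simp
  then show ?thesis by (rule sums_unique2[OF mexp_apply_sums])
qed

text \<open>On an invariant plane where \<open>M\<close> acts like multiplication by \<open>b + i w\<close>, the powers of \<open>M\<close>
  are read off from the powers of that complex number.\<close>

lemma mpow_apply_complex_plane:
  fixes M :: "real^'n^'n"
  assumes My: "M *v y = b *\<^sub>R y + u" and Mu: "M *v u = b *\<^sub>R u - w\<^sup>2 *\<^sub>R y" and w: "w \<noteq> 0"
  shows "mpow M n *v y = Re (Complex b w ^ n) *\<^sub>R y + (Im (Complex b w ^ n) / w) *\<^sub>R u"
proof (induction n)
  case 0
  then show ?case by simp
next
  case (Suc n)
  let ?z = "Complex b w"
  have "mpow M (Suc n) *v y = Re (?z ^ n) *\<^sub>R (b *\<^sub>R y + u) + (Im (?z ^ n) / w) *\<^sub>R (b *\<^sub>R u - w\<^sup>2 *\<^sub>R y)"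
    unfolding mpow_Suc_apply Suc matrix_vector_right_distrib matrix_vector_mult_scaleR My Mu ..
  also have "\<dots> = Re (?z ^ Suc n) *\<^sub>R y + (Im (?z ^ Suc n) / w) *\<^sub>R u"
    using w by (simp add: algebra_simps power2_eq_square scaleR_add_left[symmetric] del: scaleR_add_left)
      (simp add: field_simps)
  finally show ?case .
qed

lemma mexp_apply_complex_plane:
  fixes M :: "real^'n^'n"
  assumes My: "M *v y = b *\<^sub>R y + u" and Mu: "M *v u = b *\<^sub>R u - w\<^sup>2 *\<^sub>R y" and w: "w \<noteq> 0"
  shows "mexp (t *\<^sub>R M) *v y = exp (t * b) *\<^sub>R (cos (t * w) *\<^sub>R y + (sin (t * w) / w) *\<^sub>R u)"
proof -
  define z where "z = Complex b w"
  define e where "e = exp (complex_of_real t * z)"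
  have "(\<lambda>n. (t ^ n / fact n) *\<^sub>R z ^ n) sums e"
    using exp_converges[of "complex_of_real t * z"] unfolding e_def
    by (simp add: power_mult_distrib scaleR_conv_of_real divide_inverse mult_ac)
  then have "(\<lambda>n. t ^ n / fact n * Re (z ^ n)) sums Re e" "(\<lambda>n. t ^ n / fact n * Im (z ^ n)) sums Im e"
    unfolding sums_complex_iff by simp_all
  then have "(\<lambda>n. (t ^ n / fact n * Re (z ^ n)) *\<^sub>R y + (t ^ n / fact n * Im (z ^ n) / w) *\<^sub>R u)
      sums (Re e *\<^sub>R y + (Im e / w) *\<^sub>R u)"
    by (intro sums_add sums_scaleR_left sums_divide)
  moreover have "(\<lambda>n. (t ^ n / fact n * Re (z ^ n)) *\<^sub>R y + (t ^ n / fact n * Im (z ^ n) / w) *\<^sub>R u)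
      = (\<lambda>n. (1 / fact n) *\<^sub>R (mpow (t *\<^sub>R M) n *v y))"
    unfolding mpow_scaleR_apply mpow_apply_complex_plane[OF My Mu w] z_def
    by (simp add: scaleR_add_right)
  ultimately have "(\<lambda>n. (1 / fact n) *\<^sub>R (mpow (t *\<^sub>R M) n *v y)) sums (Re e *\<^sub>R y + (Im e / w) *\<^sub>R u)"
    by simp
  then have "mexp (t *\<^sub>R M) *v y = Re e *\<^sub>R y + (Im e / w) *\<^sub>R u"
    by (rule sums_unique2[OF mexp_apply_sums])
  moreover have "Re e = exp (t * b) * cos (t * w)" "Im e = exp (t * b) * sin (t * w)"
    unfolding e_def z_def by (simp_all add: Re_exp Im_exp)
  ultimately show ?thesis by (simp add: scaleR_add_right)
qed

lemma exp_mult_tendsto_0: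
  assumes "d < 0"
  shows "((\<lambda>t::real. exp (t * d)) \<longlongrightarrow> 0) at_top"
proof -
  have "((\<lambda>t. exp (d * t)) \<longlongrightarrow> 0) at_top"
    using filterlim_compose[OF exp_at_bot filterlim_tendsto_neg_mult_at_bot[OF tendsto_const assms filterlim_ident]] .
  then show ?thesis by (simp add: mult.commute)
qed

section \<open>Block diagonal matrices\<close>

locale block_diagonal =
  fixes idx :: "'n::finite \<Rightarrow> nat"
    and k :: nat and dz :: "nat \<Rightarrow> nat"
    and \<beta> \<omega> \<rho> :: "nat \<Rightarrow> real"
  assumes idx: "bij_betw idx UNIV {..<CARD('n)}"
    and dz: "\<forall>j\<in>{1..k}. dz j \<in> {1,2}"
    and dsum: "(\<Sum>j\<in>{1..k}. dz j) = CARD('n)"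
    and cplx: "\<forall>j\<in>{1..k}. dz j = 2 \<longrightarrow> 0 < \<omega> j \<and> 0 < \<rho> j"
begin

abbreviation blk :: "nat \<Rightarrow> real^'n \<Rightarrow> real^'n" where
  "blk i x \<equiv> rowrestr idx dz i x"

definition in_block :: "nat \<Rightarrow> real^'n \<Rightarrow> bool" where
  "in_block i x \<longleftrightarrow> (\<forall>p. \<not> inblk dz i (idx p) \<longrightarrow> x $ p = 0)"

abbreviation Amat :: "real^'n^'n" where
  "Amat \<equiv> blockA idx k dz \<beta> \<omega> \<rho>"

definition expA :: "real \<Rightarrow> real^'n^'n" where
  "expA t = mexp (t *\<^sub>R Amat)"

lemma row_in_block: "\<exists>i\<in>{1..k}. inblk dz i (idx p)"
proof -
  have "idx p < CARD('n)" using idx unfolding bij_betw_def by auto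
  then show ?thesis using inblk_exists[of "idx p" dz k] dsum boff_Suc_eq_sum[of dz k] by simp
qed

lemma row_block_unique:
  "inblk dz i (idx p) \<Longrightarrow> inblk dz i' (idx p) \<Longrightarrow> 1 \<le> i \<Longrightarrow> 1 \<le> i' \<Longrightarrow> i = i'"
  using inblk_unique by blast

lemma in_block_blk: "in_block i (blk i x)"
  unfolding in_block_def rowrestr_def by simp

lemma blk_in_block: "in_block i x \<Longrightarrow> blk i x = x"
  unfolding in_block_def rowrestr_def by (simp add: vec_eq_iff)

lemma blk_in_block_other: "in_block i y \<Longrightarrow> i \<noteq> i' \<Longrightarrow> 1 \<le> i \<Longrightarrow> 1 \<le> i' \<Longrightarrow> blk i' y = 0"
  unfolding in_block_def rowrestr_def by (auto simp: vec_eq_iff dest: row_block_unique)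

lemma linear_blk: "linear (blk i)"
  by (rule linearI) (auto simp: rowrestr_def vec_eq_iff)

lemma blk_scaleR: "blk i (a *\<^sub>R x) = a *\<^sub>R blk i x"
  by (rule linear_scale[OF linear_blk])

lemma blk_sum: "blk i (sum g S) = (\<Sum>x\<in>S. blk i (g x))"
  using linear_sum[OF linear_blk] by (simp add: o_def)

lemma in_block_add: "in_block i x \<Longrightarrow> in_block i y \<Longrightarrow> in_block i (x + y)"
  and in_block_scaleR: "in_block i x \<Longrightarrow> in_block i (a *\<^sub>R x)"
  and in_block_diff: "in_block i x \<Longrightarrow> in_block i y \<Longrightarrow> in_block i (x - y)"
  unfolding in_block_def by auto

lemma sum_blk: "(\<Sum>i\<in>{1..k}. blk i x) = x"
proof -
  have "(\<Sum>i\<in>{1..k}. blk i x) $ p = x $ p" for p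
  proof -
    obtain i0 where i0: "i0 \<in> {1..k}" "inblk dz i0 (idx p)" using row_in_block by blast
    have "(\<Sum>i\<in>{1..k}. blk i x) $ p = (\<Sum>i\<in>{1..k}. if i = i0 then x $ p else 0)"
      unfolding sum_component rowrestr_def
      by (rule sum.cong) (use i0 row_block_unique in auto)
    then show ?thesis using i0 by simp
  qed
  then show ?thesis by (simp add: vec_eq_iff)
qed

lemma blk_sum_blk:
  assumes I: "I \<subseteq> {1..k}" and i: "i \<in> {1..k}"
  shows "blk i (\<Sum>i'\<in>I. blk i' x) = (if i \<in> I then blk i x else 0)"
proof -
  have "blk i (\<Sum>i'\<in>I. blk i' x) = (\<Sum>i'\<in>I. if i' = i then blk i x else 0)"
    unfolding blk_sum
    using blk_in_block[OF in_block_blk] blk_in_block_other[OF in_block_blk, of _ i x] I i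
    by (intro sum.cong) auto
  also have "\<dots> = (if i \<in> I then blk i x else 0)" using finite_subset[OF I] by simp
  finally show ?thesis .
qed

lemma rowrestr_blocks_eq_sum:
  assumes I: "I \<subseteq> {1..k}"
  shows "(\<chi> p. if \<exists>i\<in>I. inblk dz i (idx p) then x $ p else 0) = (\<Sum>i\<in>I. blk i x)"
proof -
  have "(\<Sum>i\<in>I. blk i x) $ p = (if \<exists>i\<in>I. inblk dz i (idx p) then x $ p else 0)" for p
  proof (cases "\<exists>i\<in>I. inblk dz i (idx p)")
    case True
    then obtain i0 where i0: "i0 \<in> I" "inblk dz i0 (idx p)" by blast
    have "inblk dz i (idx p) \<longleftrightarrow> i = i0" if "i \<in> I" for i
      using that i0 row_block_unique[of i p i0] subsetD[OF I that] subsetD[OF I i0(1)] by auto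
    then have "(\<Sum>i\<in>I. blk i x) $ p = (\<Sum>i\<in>I. if i = i0 then x $ p else 0)"
      unfolding sum_component rowrestr_def by (intro sum.cong) auto
    then show ?thesis using i0 finite_subset[OF I] True by simp
  next
    case False
    then show ?thesis unfolding sum_component rowrestr_def by simp
  qed
  then show ?thesis by (simp add: vec_eq_iff)
qed

lemma norm_blk_le: "norm (blk i x) \<le> norm x"
  by (rule norm_le_componentwise_cart) (simp add: rowrestr_def)

definition coord :: "nat \<Rightarrow> 'n" where
  "coord r = inv_into UNIV idx r"

lemma idx_coord: "r < CARD('n) \<Longrightarrow> idx (coord r) = r"
  unfolding coord_def using idx by (simp add: bij_betw_inv_into_right)

lemma coord_idx: "coord (idx p) = p"
  unfolding coord_def using idx by (simp add: bij_betw_def)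

lemma block_end_le: "i \<in> {1..k} \<Longrightarrow> boff dz i + dz i \<le> CARD('n)"
  using boff_add_le_Suc[of i k dz] boff_Suc_eq_sum[of dz k] dsum by simp

lemma real_block_rows:
  assumes i: "i \<in> {1..k}" "dz i = 1"
  shows "inblk dz i (idx q) \<longleftrightarrow> q = coord (boff dz i)"
proof -
  have ic: "idx (coord (boff dz i)) = boff dz i" using idx_coord block_end_le[OF i(1)] i(2) by simp
  have "inblk dz i (idx q) \<longleftrightarrow> idx q = boff dz i" using i unfolding inblk_def by auto
  also have "\<dots> \<longleftrightarrow> q = coord (boff dz i)" using ic coord_idx by metis
  finally show ?thesis .
qed

lemma complex_block_rows:
  assumes i: "i \<in> {1..k}" "dz i = 2"
  shows "inblk dz i (idx q) \<longleftrightarrow> q = coord (boff dz i) \<or> q = coord (Suc (boff dz i))"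
    and "coord (boff dz i) \<noteq> coord (Suc (boff dz i))"
    and "idx (coord (boff dz i)) = boff dz i" and "idx (coord (Suc (boff dz i))) = Suc (boff dz i)"
proof -
  have e: "boff dz i + 2 \<le> CARD('n)" using block_end_le[OF i(1)] i by simp
  show i0: "idx (coord (boff dz i)) = boff dz i" and i1: "idx (coord (Suc (boff dz i))) = Suc (boff dz i)"
    using e idx_coord by auto
  show "coord (boff dz i) \<noteq> coord (Suc (boff dz i))" using i0 i1 by (metis n_not_Suc_n)
  have "inblk dz i (idx q) \<longleftrightarrow> idx q = boff dz i \<or> idx q = Suc (boff dz i)"
    using i unfolding inblk_def by auto
  then show "inblk dz i (idx q) \<longleftrightarrow> q = coord (boff dz i) \<or> q = coord (Suc (boff dz i))"
    using i0 i1 coord_idx by metis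
qed

definition Lambda_entry :: "nat \<Rightarrow> nat \<Rightarrow> nat \<Rightarrow> real" where
  "Lambda_entry j a b = (if a = b then \<beta> j
      else if a = 0 \<and> b = 1 then - \<omega> j / \<rho> j
      else if a = 1 \<and> b = 0 then \<rho> j * \<omega> j
      else 0)"

lemma Amat_entry:
  assumes "i \<in> {1..k}" "inblk dz i (idx q)"
  shows "Amat $ p $ q =
    (if inblk dz i (idx p) then Lambda_entry i (idx p - boff dz i) (idx q - boff dz i) else 0)"
proof -
  have "Amat $ p $ q = (\<Sum>j\<in>{1..k}. if j = i then (if inblk dz i (idx p)
      then Lambda_entry i (idx p - boff dz i) (idx q - boff dz i) else 0) else 0)"
    unfolding blockA_def Lambda_entry_def Let_def vec_lambda_beta
    by (rule sum.cong) (use assms row_block_unique in auto)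
  then show ?thesis using assms by simp
qed

lemma Amat_apply_in_block:
  assumes i: "i \<in> {1..k}" and y: "in_block i y"
  shows "(Amat *v y) $ p = (if inblk dz i (idx p) then
      (\<Sum>q\<in>{q. inblk dz i (idx q)}. Lambda_entry i (idx p - boff dz i) (idx q - boff dz i) * y $ q) else 0)"
proof -
  have "(Amat *v y) $ p = (\<Sum>q\<in>{q. inblk dz i (idx q)}. Amat $ p $ q * y $ q)"
    unfolding matrix_vector_mult_def vec_lambda_beta
    using y unfolding in_block_def by (intro sum.mono_neutral_right) auto
  also have "\<dots> = (\<Sum>q\<in>{q. inblk dz i (idx q)}. (if inblk dz i (idx p)
      then Lambda_entry i (idx p - boff dz i) (idx q - boff dz i) else 0) * y $ q)"
    by (rule sum.cong) (use Amat_entry[OF i] in auto)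
  finally show ?thesis by (auto simp: if_distrib)
qed

lemma in_block_Amat: "i \<in> {1..k} \<Longrightarrow> in_block i y \<Longrightarrow> in_block i (Amat *v y)"
  using Amat_apply_in_block unfolding in_block_def by simp

lemma Amat_real_block:
  assumes i: "i \<in> {1..k}" "dz i = 1" and y: "in_block i y"
  shows "Amat *v y = \<beta> i *\<^sub>R y"
proof -
  have Q: "{q. inblk dz i (idx q)} = {coord (boff dz i)}" using real_block_rows[OF i] by auto
  have "(Amat *v y) $ p = \<beta> i * y $ p" for p
    using y Amat_apply_in_block[OF i(1) y, of p] real_block_rows[OF i] unfolding Q in_block_def
    by (auto simp: Lambda_entry_def)
  then show ?thesis by (simp add: vec_eq_iff)
qed

definition Aoff :: "nat \<Rightarrow> real^'n \<Rightarrow> real^'n" where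
  "Aoff i y = Amat *v y - \<beta> i *\<^sub>R y"

lemma linear_Aoff: "linear (Aoff i)"
  unfolding Aoff_def
  by (rule linearI) (simp_all add: matrix_vector_right_distrib matrix_vector_mult_scaleR algebra_simps)

lemma in_block_Aoff: "i \<in> {1..k} \<Longrightarrow> in_block i y \<Longrightarrow> in_block i (Aoff i y)"
  unfolding Aoff_def by (intro in_block_diff in_block_Amat in_block_scaleR)

lemma Aoff_apply:
  assumes i: "i \<in> {1..k}" "dz i = 2" and y: "in_block i y"
  shows "Aoff i y $ p =
    (if p = coord (boff dz i) then - \<omega> i / \<rho> i * y $ coord (Suc (boff dz i))
     else if p = coord (Suc (boff dz i)) then \<rho> i * \<omega> i * y $ coord (boff dz i) else 0)"
proof -
  note R = complex_block_rows[OF i]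
  define q0 where "q0 = coord (boff dz i)"
  define q1 where "q1 = coord (Suc (boff dz i))"
  have Q: "{q. inblk dz i (idx q)} = {q0, q1}" using R(1) unfolding q0_def q1_def by auto
  have d: "q0 \<noteq> q1" and i0: "idx q0 = boff dz i" and i1: "idx q1 = Suc (boff dz i)"
    using R unfolding q0_def q1_def by auto
  have b0: "inblk dz i (boff dz i)" and b1: "inblk dz i (Suc (boff dz i))"
    using R(1) i0 i1 unfolding q0_def q1_def by metis+
  have A: "(Amat *v y) $ p = (if inblk dz i (idx p) then
      Lambda_entry i (idx p - boff dz i) 0 * y $ q0 + Lambda_entry i (idx p - boff dz i) 1 * y $ q1 else 0)"
    using Amat_apply_in_block[OF i(1) y, of p] d i0 i1 unfolding Q by simp
  consider "p = q0" | "p = q1" | "\<not> inblk dz i (idx p)" using R(1)[of p] q0_def q1_def by blast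
  then show ?thesis
  proof cases
    case 1
    then show ?thesis using A i0 unfolding Aoff_def q0_def[symmetric] q1_def[symmetric]
      by (simp add: Lambda_entry_def b0)
  next
    case 2
    then show ?thesis using A i1 d unfolding Aoff_def q0_def[symmetric] q1_def[symmetric]
      by (simp add: Lambda_entry_def b1)
  next
    case 3
    then have "p \<noteq> q0" "p \<noteq> q1" using b0 b1 i0 i1 by auto
    then show ?thesis using A 3 y unfolding Aoff_def q0_def[symmetric] q1_def[symmetric] in_block_def
      by simp
  qed
qed

lemma Aoff_Aoff:
  assumes i: "i \<in> {1..k}" "dz i = 2" and y: "in_block i y"
  shows "Aoff i (Aoff i y) = - ((\<omega> i)\<^sup>2) *\<^sub>R y"
proof -
  note R = complex_block_rows[OF i]
  have rho: "\<rho> i \<noteq> 0" using cplx i by auto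
  note N1 = Aoff_apply[OF i in_block_Aoff[OF i(1) y]] and N2 = Aoff_apply[OF i y]
  have "Aoff i (Aoff i y) $ p = - ((\<omega> i)\<^sup>2) * y $ p" for p
  proof -
    consider "p = coord (boff dz i)" | "p = coord (Suc (boff dz i))" | "\<not> inblk dz i (idx p)"
      using R(1)[of p] by blast
    then show ?thesis
    proof cases
      case 1
      then show ?thesis using N1[of p] N2[of "coord (Suc (boff dz i))"] R(2) rho
        by (simp add: power2_eq_square)
    next
      case 2
      then show ?thesis using N1[of p] N2[of "coord (boff dz i)"] R(2) rho
        by (simp add: power2_eq_square)
    next
      case 3
      then show ?thesis using N1[of p] y R(1)[of p] unfolding in_block_def by auto
    qed
  qed
  then show ?thesis by (simp add: vec_eq_iff)
qed

lemma expA_real_block: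
  assumes "i \<in> {1..k}" "dz i = 1" "in_block i y"
  shows "expA t *v y = exp (t * \<beta> i) *\<^sub>R y"
  unfolding expA_def by (rule mexp_apply_eigenvector[OF Amat_real_block[OF assms]])

lemma expA_complex_block:
  assumes i: "i \<in> {1..k}" "dz i = 2" and y: "in_block i y"
  shows "expA t *v y =
    exp (t * \<beta> i) *\<^sub>R (cos (t * \<omega> i) *\<^sub>R y + (sin (t * \<omega> i) / \<omega> i) *\<^sub>R Aoff i y)"
  unfolding expA_def
proof (rule mexp_apply_complex_plane)
  show "Amat *v y = \<beta> i *\<^sub>R y + Aoff i y" unfolding Aoff_def by simp
  show "Amat *v Aoff i y = \<beta> i *\<^sub>R Aoff i y - (\<omega> i)\<^sup>2 *\<^sub>R y"
    using Aoff_Aoff[OF i y] unfolding Aoff_def[of i "Aoff i y"] by (simp add: algebra_simps)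
  show "\<omega> i \<noteq> 0" using cplx i by auto
qed

lemma dz_cases:
  assumes "i \<in> {1..k}"
  obtains "dz i = 1" | "dz i = 2"
  using dz assms by blast

lemma in_block_expA:
  assumes i: "i \<in> {1..k}" and y: "in_block i y"
  shows "in_block i (expA t *v y)"
proof (cases rule: dz_cases[OF i])
  case 1
  then show ?thesis using expA_real_block[OF i 1 y] y by (simp add: in_block_scaleR)
next
  case 2
  then show ?thesis unfolding expA_complex_block[OF i 2 y]
    by (intro in_block_scaleR in_block_add in_block_Aoff[OF i y] y)
qed

lemma expA_sum: "expA t *v (sum g S) = (\<Sum>x\<in>S. expA t *v g x)"
  using linear_sum[OF matrix_vector_mul_linear[of "expA t"]] by (simp add: o_def)

lemma blk_expA: "i \<in> {1..k} \<Longrightarrow> blk i (expA t *v x) = expA t *v (blk i x)"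
proof -
  assume i: "i \<in> {1..k}"
  have "blk i (expA t *v x) = (\<Sum>j\<in>{1..k}. blk i (expA t *v blk j x))"
    using sum_blk[of x] by (metis blk_sum expA_sum)
  also have "\<dots> = (\<Sum>j\<in>{1..k}. if j = i then expA t *v blk i x else 0)"
  proof (rule sum.cong)
    fix j assume j: "j \<in> {1..k}"
    have "in_block j (expA t *v blk j x)" by (rule in_block_expA[OF j in_block_blk])
    then show "blk i (expA t *v blk j x) = (if j = i then expA t *v blk i x else 0)"
      using blk_in_block blk_in_block_other[of j _ i] i j by auto
  qed simp
  finally show ?thesis using i by simp
qed

definition normA :: real where
  "normA = onorm ((*v) Amat)"

definition block_const :: "nat \<Rightarrow> real" where
  "block_const i = (if dz i = 2 then 1 + (normA + \<bar>\<beta> i\<bar>) / \<omega> i else 1)"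

definition expA_const :: real where
  "expA_const = (\<Sum>i\<in>{1..k}. block_const i)"

lemma normA_nonneg: "0 \<le> normA"
  unfolding normA_def by (rule onorm_pos_le) simp

lemma block_const_ge_1: "i \<in> {1..k} \<Longrightarrow> 1 \<le> block_const i"
  unfolding block_const_def using cplx normA_nonneg by auto

lemma block_const_le_expA_const: "i \<in> {1..k} \<Longrightarrow> block_const i \<le> expA_const"
  unfolding expA_const_def using block_const_ge_1
  by (intro member_le_sum) (auto intro: order_trans[OF zero_le_one])

lemma expA_const_nonneg: "0 \<le> expA_const"
  unfolding expA_const_def using block_const_ge_1 by (intro sum_nonneg) (auto intro: order_trans[OF zero_le_one])

lemma norm_Aoff_le: "norm (Aoff i x) \<le> (normA + \<bar>\<beta> i\<bar>) * norm x"
  using onorm[of "(*v) Amat" x] norm_triangle_ineq4[of "Amat *v x" "\<beta> i *\<^sub>R x"]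
  unfolding Aoff_def normA_def by (simp add: algebra_simps)

text \<open>The rotation part of \<open>e\<^sup>t\<^sup>A\<close> on a complex block and its inverse are combinations
  \<open>a I + (b/\<omega>\<^sub>i) (A - \<beta>\<^sub>i I)\<close> with \<open>|a|, |b| \<le> 1\<close>.\<close>

lemma norm_rotation_le:
  assumes i: "i \<in> {1..k}" "dz i = 2" and ab: "\<bar>a\<bar> \<le> 1" "\<bar>b\<bar> \<le> 1"
  shows "norm (a *\<^sub>R x + (b / \<omega> i) *\<^sub>R Aoff i x) \<le> block_const i * norm x"
proof -
  have w: "\<omega> i > 0" using cplx i by auto
  have "norm (a *\<^sub>R x + (b / \<omega> i) *\<^sub>R Aoff i x) \<le> \<bar>a\<bar> * norm x + \<bar>b\<bar> / \<omega> i * norm (Aoff i x)"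
    using norm_triangle_ineq[of "a *\<^sub>R x" "(b / \<omega> i) *\<^sub>R Aoff i x"] w by (simp add: abs_div)
  also have "\<dots> \<le> \<bar>a\<bar> * norm x + \<bar>b\<bar> / \<omega> i * ((normA + \<bar>\<beta> i\<bar>) * norm x)"
    using w by (intro add_left_mono mult_left_mono norm_Aoff_le) auto
  also have "\<dots> = (\<bar>a\<bar> + \<bar>b\<bar> * ((normA + \<bar>\<beta> i\<bar>) / \<omega> i)) * norm x"
    by (simp add: algebra_simps add_divide_distrib)
  also have "\<dots> \<le> block_const i * norm x"
  proof -
    have "\<bar>b\<bar> * ((normA + \<bar>\<beta> i\<bar>) / \<omega> i) \<le> (normA + \<bar>\<beta> i\<bar>) / \<omega> i"
      using ab(2) w normA_nonneg by (intro mult_left_le_one_le) auto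
    then show ?thesis unfolding block_const_def using i(2) ab(1) by (intro mult_right_mono) auto
  qed
  finally show ?thesis .
qed

lemma expA_block_bounds:
  assumes i: "i \<in> {1..k}" and y: "in_block i y"
  shows "norm (expA t *v y) \<le> block_const i * (exp (t * \<beta> i) * norm y)"
    and "exp (t * \<beta> i) * norm y \<le> block_const i * norm (expA t *v y)"
proof -
  consider "dz i = 1" | "dz i = 2" using dz_cases[OF i] by blast
  then have "norm (expA t *v y) \<le> block_const i * (exp (t * \<beta> i) * norm y) \<and>
      exp (t * \<beta> i) * norm y \<le> block_const i * norm (expA t *v y)"
  proof cases
    case 1
    then show ?thesis using expA_real_block[OF i 1 y, of t] by (simp add: block_const_def)
  next
    case d: 2
    have w: "\<omega> i > 0" using cplx i d by auto
    define c where "c = cos (t * \<omega> i)"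
    define s where "s = sin (t * \<omega> i)"
    define R where "R = c *\<^sub>R y + (s / \<omega> i) *\<^sub>R Aoff i y"
    have cs: "\<bar>c\<bar> \<le> 1" "\<bar>s\<bar> \<le> 1" "c\<^sup>2 + s\<^sup>2 = 1" unfolding c_def s_def by auto
    have E: "expA t *v y = exp (t * \<beta> i) *\<^sub>R R"
      unfolding R_def c_def s_def by (rule expA_complex_block[OF i d y])
    have NR: "Aoff i R = c *\<^sub>R Aoff i y - (s * \<omega> i) *\<^sub>R y"
      unfolding R_def linear_add[OF linear_Aoff] linear_scale[OF linear_Aoff] Aoff_Aoff[OF i d y]
      using w by (simp add: power2_eq_square algebra_simps)
    have "c *\<^sub>R R + (- s / \<omega> i) *\<^sub>R Aoff i R = (c\<^sup>2 + s\<^sup>2) *\<^sub>R y"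
      unfolding NR unfolding R_def using w by (simp add: algebra_simps power2_eq_square)
    then have "norm y \<le> block_const i * norm R"
      using norm_rotation_le[OF i d, of c "- s" R] cs by simp
    moreover have "norm R \<le> block_const i * norm y"
      unfolding R_def using norm_rotation_le[OF i d] cs by simp
    ultimately show ?thesis unfolding E by (auto simp: mult_left_mono mult.left_commute)
  qed
  then show "norm (expA t *v y) \<le> block_const i * (exp (t * \<beta> i) * norm y)"
    and "exp (t * \<beta> i) * norm y \<le> block_const i * norm (expA t *v y)" by auto
qed

lemma expA_upper_bound:
  "i \<in> {1..k} \<Longrightarrow> in_block i y \<Longrightarrow> norm (expA t *v y) \<le> expA_const * (exp (t * \<beta> i) * norm y)"
  using expA_block_bounds(1)[of i y t] block_const_le_expA_const[of i]
  by (meson mult_nonneg_nonneg exp_ge_zero norm_ge_zero mult_right_mono order_trans)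

lemma expA_lower_bound:
  assumes i: "i \<in> {1..k}"
  shows "exp (t * \<beta> i) * norm (blk i x) \<le> expA_const * norm (expA t *v x)"
proof -
  have "exp (t * \<beta> i) * norm (blk i x) \<le> block_const i * norm (blk i (expA t *v x))"
    using expA_block_bounds(2)[OF i in_block_blk] blk_expA[OF i] by simp
  also have "\<dots> \<le> expA_const * norm (expA t *v x)"
    using block_const_le_expA_const[OF i] block_const_ge_1[OF i] norm_blk_le
    by (intro mult_mono) auto
  finally show ?thesis .
qed

end

section \<open>Column groups in block echelon form\<close>

locale block_echelon = block_diagonal idx k dz \<beta> \<omega> \<rho>
  for idx :: "'n::finite \<Rightarrow> nat" and k dz \<beta> \<omega> \<rho> +
  fixes s r :: nat and b kk :: "nat \<Rightarrow> nat"
  assumes mono: "\<forall>i j. 1 \<le> i \<and> i \<le> j \<and> j \<le> k \<longrightarrow> \<beta> j \<le> \<beta> i"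
    and bsum: "(\<Sum>j\<in>{1..r}. b j) = s"
    and kklt: "\<forall>j\<in>{1..r}. kk j < k"
    and kkmono: "\<forall>j\<in>{1..<r}. kk j < kk (Suc j)"
begin

definition cols :: "nat \<Rightarrow> nat set" where
  "cols j = {boff b j..<boff b j + b j}"

abbreviation lead :: "nat \<Rightarrow> nat" where
  "lead j \<equiv> Suc (kk j)"

definition lead_rate :: "nat \<Rightarrow> real" where
  "lead_rate j = \<beta> (lead j)"

definition echelon_family :: "(nat \<Rightarrow> real^'n) \<Rightarrow> bool" where
  "echelon_family u \<longleftrightarrow>
     (\<forall>j\<in>{1..r}. \<forall>c\<in>cols j. \<forall>i\<in>{1..kk j}. blk i (u c) = 0) \<and>
     (\<forall>j\<in>{1..r}. rank_block idx dz (lead j) u (boff b j) (b j) = b j)"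

definition weighted_coeffs :: "(nat \<Rightarrow> real) \<Rightarrow> real \<Rightarrow> real" where
  "weighted_coeffs a t = (\<Sum>j\<in>{1..r}. \<Sum>c\<in>cols j. \<bar>a c\<bar> * exp (t * lead_rate j))"

definition lead_norms :: "(nat \<Rightarrow> real^'n) \<Rightarrow> (nat \<Rightarrow> real) \<Rightarrow> real \<Rightarrow> real" where
  "lead_norms u a t = (\<Sum>j\<in>{1..r}. exp (t * lead_rate j) * norm (blk (lead j) (\<Sum>c<s. a c *\<^sub>R u c)))"

lemma sum_lessThan_cols: "(\<Sum>c<s. g c) = (\<Sum>j\<in>{1..r}. \<Sum>c\<in>cols j. g c)"
  using sum_lessThan_boff[where f = b and m = r and g = g] boff_Suc_eq_sum[of b r] bsum unfolding cols_def by simp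

lemma cols_lessThan: "j \<in> {1..r} \<Longrightarrow> c \<in> cols j \<Longrightarrow> c < s"
  using boff_add_le_Suc[where f = b and j = j and m = r] boff_Suc_eq_sum[of b r] bsum unfolding cols_def by auto

lemma lead_in_blocks: "j \<in> {1..r} \<Longrightarrow> lead j \<in> {1..k}"
  using kklt by (auto dest: bspec)

lemma kk_strict_mono: "j \<in> {1..r} \<Longrightarrow> l \<in> {1..r} \<Longrightarrow> j < l \<Longrightarrow> kk j < kk l"
proof (induction l)
  case 0
  then show ?case by simp
next
  case (Suc l)
  then show ?case using kkmono by (cases "j = l") (auto intro: less_trans)
qed

lemma lead_rate_antimono:
  assumes l: "l \<in> {1..r}" and j: "j \<in> {1..r}" and lj: "l \<le> j"
  shows "lead_rate j \<le> lead_rate l"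
proof -
  have "kk l \<le> kk j" using kk_strict_mono[OF l j] lj by (cases "l = j") auto
  then show ?thesis
    using mono[rule_format, of "lead l" "lead j"] lead_in_blocks[OF j] unfolding lead_rate_def by auto
qed

lemma weighted_coeffs_0: "weighted_coeffs a 0 = (\<Sum>c<s. \<bar>a c\<bar>)"
  unfolding weighted_coeffs_def sum_lessThan_cols by simp

lemma lead_norms_nonneg: "0 \<le> lead_norms u a t"
  unfolding lead_norms_def by (intro sum_nonneg) simp

lemma lead_norms_0_le: "lead_norms u a 0 \<le> real r * norm (\<Sum>c<s. a c *\<^sub>R u c)"
  unfolding lead_norms_def using sum_bounded_above[of "{1..r}" _ "norm (\<Sum>c<s. a c *\<^sub>R u c)"]
  by (simp add: norm_blk_le)

lemma lead_norms_le_expA: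
  "lead_norms u a t \<le> real r * expA_const * norm (expA t *v (\<Sum>c<s. a c *\<^sub>R u c))"
proof -
  have "lead_norms u a t \<le> (\<Sum>j\<in>{1..r}. expA_const * norm (expA t *v (\<Sum>c<s. a c *\<^sub>R u c)))"
    unfolding lead_norms_def lead_rate_def
    by (intro sum_mono expA_lower_bound lead_in_blocks) simp
  then show ?thesis by simp
qed

lemma lead_block_coeffs_le:
  assumes u: "echelon_family u" and j: "j \<in> {1..r}"
  shows "\<exists>\<mu>>0. \<forall>a. \<mu> * (\<Sum>c\<in>cols j. \<bar>a c\<bar>) \<le> norm (\<Sum>c\<in>cols j. a c *\<^sub>R blk (lead j) (u c))"
proof -
  define T where "T = (\<lambda>c. blk (lead j) (u c)) ` cols j"
  have fT: "finite T" unfolding T_def cols_def by simp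
  have dT: "dim (span T) = card (cols j)"
    using u j unfolding echelon_family_def rank_block_def T_def cols_def by simp
  have "dim (span T) \<le> card T" using dim_le_card[of "span T" T] fT by simp
  moreover have "card T \<le> card (cols j)" unfolding T_def cols_def by (rule card_image_le) simp
  ultimately have cT: "card T = card (cols j)" using dT by simp
  have inj: "inj_on (\<lambda>c. blk (lead j) (u c)) (cols j)"
    by (rule eq_card_imp_inj_on) (use cT in \<open>auto simp: cols_def T_def\<close>)
  have "independent T"
    using card_eq_dim[of T "span T"] fT span_superset[of T] cT dT by simp
  then show ?thesis
    using sum_abs_coeffs_le_norm_sum[of "cols j" "\<lambda>c. blk (lead j) (u c)"] inj
    unfolding T_def cols_def by simp
qed

text \<open>Groups after \<open>j\<close> vanish on the leading block of group \<open>j\<close>.\<close>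

lemma blk_lead_split:
  assumes u: "echelon_family u" and j: "j \<in> {1..r}"
  shows "blk (lead j) (\<Sum>c<s. a c *\<^sub>R u c) =
    (\<Sum>l\<in>{1..<j}. \<Sum>c\<in>cols l. a c *\<^sub>R blk (lead j) (u c)) + (\<Sum>c\<in>cols j. a c *\<^sub>R blk (lead j) (u c))"
proof -
  have "blk (lead j) (\<Sum>c<s. a c *\<^sub>R u c) = (\<Sum>l\<in>{1..r}. \<Sum>c\<in>cols l. a c *\<^sub>R blk (lead j) (u c))"
    unfolding blk_sum sum_lessThan_cols blk_scaleR ..
  also have "\<dots> = (\<Sum>l\<in>{1..j}. \<Sum>c\<in>cols l. a c *\<^sub>R blk (lead j) (u c))"
  proof (rule sum.mono_neutral_right)
    show "\<forall>l\<in>{1..r} - {1..j}. (\<Sum>c\<in>cols l. a c *\<^sub>R blk (lead j) (u c)) = 0"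
    proof
      fix l assume l: "l \<in> {1..r} - {1..j}"
      then have l1: "l \<in> {1..r}" and "lead j \<in> {1..kk l}" using kk_strict_mono[OF j, of l] j by auto
      then have "blk (lead j) (u c) = 0" if "c \<in> cols l" for c
        using u that unfolding echelon_family_def by blast
      then show "(\<Sum>c\<in>cols l. a c *\<^sub>R blk (lead j) (u c)) = 0" by simp
    qed
  qed (use j in auto)
  also have "\<dots> = (\<Sum>l\<in>{1..<j}. \<Sum>c\<in>cols l. a c *\<^sub>R blk (lead j) (u c)) + (\<Sum>c\<in>cols j. a c *\<^sub>R blk (lead j) (u c))"
    using j by (simp add: atLeastLessThanSuc_atLeastAtMost[symmetric] del: atLeastLessThanSuc_atLeastAtMost)
  finally show ?thesis .
qed

lemma group_coeffs_le:
  assumes u: "echelon_family u" and j: "j \<in> {1..r}" and t: "0 \<le> t"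
    and \<mu>: "\<mu> * (\<Sum>c\<in>cols j. \<bar>a c\<bar>) \<le> norm (\<Sum>c\<in>cols j. a c *\<^sub>R blk (lead j) (u c))"
  shows "\<mu> * (\<Sum>c\<in>cols j. \<bar>a c\<bar> * exp (t * lead_rate j))
    \<le> lead_norms u a t + (\<Sum>c<s. norm (u c)) * (\<Sum>l\<in>{1..<j}. \<Sum>c\<in>cols l. \<bar>a c\<bar> * exp (t * lead_rate l))"
proof -
  define e where "e = exp (t * lead_rate j)"
  define B where "B = (\<Sum>c<s. norm (u c))"
  define Z where "Z = (\<Sum>l\<in>{1..<j}. \<Sum>c\<in>cols l. a c *\<^sub>R blk (lead j) (u c))"
  define Y where "Y = (\<Sum>c\<in>cols j. a c *\<^sub>R blk (lead j) (u c))"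
  have e: "0 < e" unfolding e_def by simp
  have lead: "e * norm (Z + Y) \<le> lead_norms u a t"
    unfolding lead_norms_def e_def Z_def Y_def blk_lead_split[OF u j, symmetric]
    by (rule member_le_sum) (use j in auto)
  have "e * norm Z \<le> (\<Sum>l\<in>{1..<j}. \<Sum>c\<in>cols l. e * (\<bar>a c\<bar> * norm (blk (lead j) (u c))))"
    unfolding Z_def sum_distrib_left[symmetric] using e
    by (intro mult_left_mono order_trans[OF norm_sum sum_mono] order_trans[OF norm_sum]) simp_all
  also have "\<dots> \<le> (\<Sum>l\<in>{1..<j}. \<Sum>c\<in>cols l. B * (\<bar>a c\<bar> * exp (t * lead_rate l)))"
  proof (intro sum_mono)
    fix l c assume l: "l \<in> {1..<j}" and c: "c \<in> cols l"
    have l1: "l \<in> {1..r}" using l j by auto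
    have "e \<le> exp (t * lead_rate l)"
      unfolding e_def using lead_rate_antimono[OF l1 j] l t by (simp add: mult_left_mono)
    moreover have "norm (blk (lead j) (u c)) \<le> B"
      unfolding B_def using cols_lessThan[OF l1 c]
      by (intro order_trans[OF norm_blk_le] member_le_sum) auto
    ultimately have "e * norm (blk (lead j) (u c)) \<le> exp (t * lead_rate l) * B"
      by (intro mult_mono) auto
    from mult_left_mono[OF this abs_ge_zero[of "a c"]]
    show "e * (\<bar>a c\<bar> * norm (blk (lead j) (u c))) \<le> B * (\<bar>a c\<bar> * exp (t * lead_rate l))"
      by (simp add: mult_ac)
  qed
  finally have eZ: "e * norm Z \<le> B * (\<Sum>l\<in>{1..<j}. \<Sum>c\<in>cols l. \<bar>a c\<bar> * exp (t * lead_rate l))"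
    by (simp add: sum_distrib_left)
  have "\<mu> * (\<Sum>c\<in>cols j. \<bar>a c\<bar> * exp (t * lead_rate j)) = e * (\<mu> * (\<Sum>c\<in>cols j. \<bar>a c\<bar>))"
    unfolding e_def by (simp add: sum_distrib_left sum_distrib_right mult_ac)
  also have "\<dots> \<le> e * norm (Z + Y) + e * norm Z"
    using \<mu> norm_triangle_ineq4[of "Z + Y" Z] e unfolding Y_def
    by (simp add: distrib_left[symmetric] mult_left_mono)
  finally show ?thesis using lead eZ unfolding B_def by linarith
qed

lemma weighted_coeffs_le_lead_norms:
  assumes u: "echelon_family u"
  obtains D where "0 < D" "\<And>t a. 0 \<le> t \<Longrightarrow> weighted_coeffs a t \<le> D * lead_norms u a t"
proof -
  define B where "B = (\<Sum>c<s. norm (u c))"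
  have B: "0 \<le> B" unfolding B_def by (simp add: sum_nonneg)
  have "m \<le> r \<Longrightarrow> \<exists>D>0. \<forall>t\<ge>0. \<forall>a.
      (\<Sum>l\<in>{1..m}. \<Sum>c\<in>cols l. \<bar>a c\<bar> * exp (t * lead_rate l)) \<le> D * lead_norms u a t" for m
  proof (induction m)
    case 0
    then show ?case using lead_norms_nonneg by (intro exI[of _ 1]) auto
  next
    case (Suc m)
    then obtain D where D: "0 < D" and IH: "\<And>t a. 0 \<le> t \<Longrightarrow>
        (\<Sum>l\<in>{1..m}. \<Sum>c\<in>cols l. \<bar>a c\<bar> * exp (t * lead_rate l)) \<le> D * lead_norms u a t"
      by auto
    have j: "Suc m \<in> {1..r}" using Suc.prems by auto
    obtain \<mu> where \<mu>: "0 < \<mu>" and \<mu>H: "\<And>a. \<mu> * (\<Sum>c\<in>cols (Suc m). \<bar>a c\<bar>)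
        \<le> norm (\<Sum>c\<in>cols (Suc m). a c *\<^sub>R blk (lead (Suc m)) (u c))"
      using lead_block_coeffs_le[OF u j] by blast
    show ?case
    proof (intro exI[of _ "D + (1 + B * D) / \<mu>"] conjI allI impI)
      show "0 < D + (1 + B * D) / \<mu>" using D \<mu> B by (simp add: add_pos_nonneg)
      fix t a assume t: "0 \<le> (t::real)"
      let ?L = "lead_norms u a t"
      have "{1..<Suc m} = {1..m}" by auto
      then have "\<mu> * (\<Sum>c\<in>cols (Suc m). \<bar>a c\<bar> * exp (t * lead_rate (Suc m)))
          \<le> ?L + B * (\<Sum>l\<in>{1..m}. \<Sum>c\<in>cols l. \<bar>a c\<bar> * exp (t * lead_rate l))"
        using group_coeffs_le[OF u j t \<mu>H] unfolding B_def by simp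
      also have "\<dots> \<le> ?L + B * (D * ?L)" using IH[OF t] B by (intro add_left_mono mult_left_mono)
      finally have "\<mu> * (\<Sum>c\<in>cols (Suc m). \<bar>a c\<bar> * exp (t * lead_rate (Suc m))) \<le> ?L + B * (D * ?L)" .
      then have "(\<Sum>c\<in>cols (Suc m). \<bar>a c\<bar> * exp (t * lead_rate (Suc m))) \<le> (1 + B * D) * ?L / \<mu>"
        using \<mu> by (simp add: field_simps)
      with IH[OF t, of a] show "(\<Sum>l\<in>{1..Suc m}. \<Sum>c\<in>cols l. \<bar>a c\<bar> * exp (t * lead_rate l))
          \<le> (D + (1 + B * D) / \<mu>) * ?L"
        by (simp add: distrib_right)
    qed
  qed
  from this[of r] that show thesis unfolding weighted_coeffs_def by blast
qed

lemma echelon_family_independent: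
  assumes u: "echelon_family u"
  shows "inj_on u {..<s}" and "independent (u ` {..<s})"
proof -
  obtain D where "0 < D" and D: "\<And>t a. 0 \<le> t \<Longrightarrow> weighted_coeffs a t \<le> D * lead_norms u a t"
    using weighted_coeffs_le_lead_norms[OF u] by blast
  have "(\<Sum>c<s. \<bar>a c\<bar>) \<le> (D * real r) * norm (\<Sum>c<s. a c *\<^sub>R u c)" for a
  proof -
    have "(\<Sum>c<s. \<bar>a c\<bar>) \<le> D * lead_norms u a 0" using D[of 0 a] by (simp add: weighted_coeffs_0)
    also have "\<dots> \<le> D * (real r * norm (\<Sum>c<s. a c *\<^sub>R u c))"
      using lead_norms_0_le \<open>0 < D\<close> by (intro mult_left_mono) auto
    finally show ?thesis by (simp add: mult.assoc)
  qed
  then show "inj_on u {..<s}" and "independent (u ` {..<s})"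
    by (fact independent_if_sum_abs_coeffs_le)+
qed

lemma weighted_coeffs_le_expA:
  assumes u: "echelon_family u"
  obtains C where "0 \<le> C"
    "\<And>t a. 0 \<le> t \<Longrightarrow> weighted_coeffs a t \<le> C * norm (expA t *v (\<Sum>c<s. a c *\<^sub>R u c))"
proof -
  obtain D where D: "0 < D" "\<And>t a. 0 \<le> t \<Longrightarrow> weighted_coeffs a t \<le> D * lead_norms u a t"
    using weighted_coeffs_le_lead_norms[OF u] by blast
  show thesis
  proof
    show "0 \<le> D * (real r * expA_const)" using D(1) expA_const_nonneg by simp
    fix t a assume "0 \<le> (t::real)"
    then have "weighted_coeffs a t \<le> D * (real r * expA_const * norm (expA t *v (\<Sum>c<s. a c *\<^sub>R u c)))"
      using D lead_norms_le_expA by (meson mult_left_mono less_imp_le order_trans)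
    then show "weighted_coeffs a t \<le> D * (real r * expA_const) * norm (expA t *v (\<Sum>c<s. a c *\<^sub>R u c))"
      by (simp add: mult.assoc)
  qed
qed

end

section \<open>The limit subspace \<open>V\<^sup>\<infinity>\<close>\<close>

context block_echelon
begin

definition lead_blocks :: "nat \<Rightarrow> nat set" where
  "lead_blocks j = {lead j..kk j + ell k \<beta> kk j}"

lemma ell_spec:
  assumes j: "j \<in> {1..r}"
  shows "1 \<le> ell k \<beta> kk j" and "kk j + ell k \<beta> kk j \<le> k"
    and "\<And>i. i \<in> lead_blocks j \<Longrightarrow> \<beta> i = lead_rate j"
    and "\<And>l. 1 \<le> l \<Longrightarrow> kk j + l \<le> k \<Longrightarrow> \<forall>i\<in>{lead j..kk j + l}. \<beta> i = lead_rate j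
      \<Longrightarrow> l \<le> ell k \<beta> kk j"
proof -
  define P where "P l \<longleftrightarrow> 1 \<le> l \<and> kk j + l \<le> k \<and> (\<forall>i\<in>{lead j..kk j + l}. \<beta> i = lead_rate j)" for l
  have ell: "ell k \<beta> kk j = Greatest P" unfolding ell_def P_def lead_rate_def by simp
  have P1: "P 1" unfolding P_def lead_rate_def using lead_in_blocks[OF j] by auto
  have bound: "P l \<Longrightarrow> l \<le> k" for l unfolding P_def by auto
  have "P (ell k \<beta> kk j)" unfolding ell by (rule GreatestI_nat[of P 1 k, OF P1 bound])
  then show "1 \<le> ell k \<beta> kk j" "kk j + ell k \<beta> kk j \<le> k" "\<And>i. i \<in> lead_blocks j \<Longrightarrow> \<beta> i = lead_rate j"
    unfolding P_def lead_blocks_def by auto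
  show "l \<le> ell k \<beta> kk j" if "1 \<le> l" "kk j + l \<le> k" "\<forall>i\<in>{lead j..kk j + l}. \<beta> i = lead_rate j" for l
    unfolding ell using that by (intro Greatest_le_nat[of P l k]) (auto simp: P_def)
qed

lemma beta_less_lead_rate:
  assumes j: "j \<in> {1..r}" and i: "kk j + ell k \<beta> kk j < i" "i \<le> k"
  shows "\<beta> i < lead_rate j"
proof -
  define m where "m = Suc (kk j + ell k \<beta> kk j)"
  have m: "m \<le> i" "lead j \<le> m" using i unfolding m_def by auto
  have "\<beta> m \<noteq> lead_rate j"
  proof
    assume "\<beta> m = lead_rate j"
    then have "\<forall>i\<in>{lead j..kk j + Suc (ell k \<beta> kk j)}. \<beta> i = lead_rate j"
      using ell_spec(3)[OF j] unfolding lead_blocks_def m_def by (auto simp: le_Suc_eq)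
    then have "Suc (ell k \<beta> kk j) \<le> ell k \<beta> kk j"
      using ell_spec(4)[OF j, of "Suc (ell k \<beta> kk j)"] i unfolding m_def by auto
    then show False by simp
  qed
  moreover have "\<beta> i \<le> \<beta> m" "\<beta> m \<le> lead_rate j"
    using mono m i unfolding lead_rate_def by auto
  ultimately show ?thesis by simp
qed

lemma lead_blocks_subset: "j \<in> {1..r} \<Longrightarrow> lead_blocks j \<subseteq> {1..k}"
  using ell_spec(2) unfolding lead_blocks_def by auto

lemma lead_in_lead_blocks: "j \<in> {1..r} \<Longrightarrow> lead j \<in> lead_blocks j"
  using ell_spec(1) unfolding lead_blocks_def by auto

lemma cols_disjoint: "j \<in> {1..r} \<Longrightarrow> j' \<in> {1..r} \<Longrightarrow> c \<in> cols j \<Longrightarrow> c \<in> cols j' \<Longrightarrow> j = j'"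
  using inblk_unique[of b j c j'] unfolding cols_def inblk_def by auto

end

locale echelon_basis = block_echelon idx k dz \<beta> \<omega> \<rho> s r b kk
  for idx :: "'n::finite \<Rightarrow> nat" and k dz \<beta> \<omega> \<rho> s r b kk +
  fixes w :: "nat \<Rightarrow> real^'n"
  assumes w: "echelon_family w"
begin

abbreviation winfty :: "nat \<Rightarrow> real^'n" where
  "winfty \<equiv> winf idx k dz \<beta> w r b kk"

lemma winfty_eq:
  assumes j: "j \<in> {1..r}" and c: "c \<in> cols j"
  shows "winfty c = (\<Sum>i\<in>lead_blocks j. blk i (w c))"
proof -
  have iff: "boff b j' \<le> c \<and> c < boff b j' + b j' \<longleftrightarrow> j' = j" if "j' \<in> {1..r}" for j'
    using cols_disjoint[OF that j _ c] c unfolding cols_def by auto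
  have "winfty c = (\<Sum>j'\<in>{1..r}. if j' = j
      then (\<chi> p. if \<exists>i\<in>lead_blocks j. inblk dz i (idx p) then w c $ p else 0) else 0)"
    unfolding winf_def lead_blocks_def by (intro sum.cong refl) (simp add: iff)
  then have "winfty c = (\<chi> p. if \<exists>i\<in>lead_blocks j. inblk dz i (idx p) then w c $ p else 0)"
    using j by simp
  then show ?thesis using rowrestr_blocks_eq_sum[OF lead_blocks_subset[OF j]] by simp
qed

lemma echelon_family_winfty: "echelon_family winfty"
  unfolding echelon_family_def
proof (intro conjI ballI)
  fix j c i assume j: "j \<in> {1..r}" and c: "c \<in> cols j" and i: "i \<in> {1..kk j}"
  then have i: "i \<in> {1..k}" and "i \<notin> lead_blocks j"
    using bspec[OF kklt j] unfolding lead_blocks_def by auto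
  then show "blk i (winfty c) = 0"
    unfolding winfty_eq[OF j c] using blk_sum_blk[OF lead_blocks_subset[OF j] i] by simp
next
  fix j assume j: "j \<in> {1..r}"
  have "blk (lead j) (winfty c) = blk (lead j) (w c)" if "c \<in> cols j" for c
    unfolding winfty_eq[OF j that] blk_sum_blk[OF lead_blocks_subset[OF j] lead_in_blocks[OF j]]
    using lead_in_lead_blocks[OF j] by simp
  then have "rank_block idx dz (lead j) winfty (boff b j) (b j) = rank_block idx dz (lead j) w (boff b j) (b j)"
    unfolding rank_block_def cols_def by (metis (no_types, lifting) image_cong)
  then show "rank_block idx dz (lead j) winfty (boff b j) (b j) = b j"
    using w j unfolding echelon_family_def by simp
qed

definition tail_rate :: "nat \<Rightarrow> nat \<Rightarrow> real \<Rightarrow> real" where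
  "tail_rate j c t =
    (\<Sum>i\<in>{1..k} - lead_blocks j. expA_const * exp (t * (\<beta> i - lead_rate j)) * norm (blk i (w c)))"

lemma tail_rate_nonneg: "0 \<le> tail_rate j c t"
  unfolding tail_rate_def using expA_const_nonneg by (intro sum_nonneg) auto

lemma norm_expA_tail_le:
  assumes j: "j \<in> {1..r}" and c: "c \<in> cols j"
  shows "norm (expA t *v (w c - winfty c)) \<le> exp (t * lead_rate j) * tail_rate j c t"
proof -
  have "w c = (\<Sum>i\<in>{1..k} - lead_blocks j. blk i (w c)) + (\<Sum>i\<in>lead_blocks j. blk i (w c))"
    using sum_blk[of "w c"] sum.subset_diff[OF lead_blocks_subset[OF j], of "\<lambda>i. blk i (w c)"] by simp
  then have "w c - winfty c = (\<Sum>i\<in>{1..k} - lead_blocks j. blk i (w c))"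
    unfolding winfty_eq[OF j c] by (metis add_diff_cancel_right')
  then have "expA t *v (w c - winfty c) = (\<Sum>i\<in>{1..k} - lead_blocks j. expA t *v blk i (w c))"
    by (simp add: expA_sum)
  then have "norm (expA t *v (w c - winfty c)) \<le> (\<Sum>i\<in>{1..k} - lead_blocks j. norm (expA t *v blk i (w c)))"
    by (simp add: norm_sum)
  also have "\<dots> \<le> (\<Sum>i\<in>{1..k} - lead_blocks j. expA_const * (exp (t * \<beta> i) * norm (blk i (w c))))"
    by (intro sum_mono expA_upper_bound in_block_blk) auto
  also have "\<dots> = exp (t * lead_rate j) * tail_rate j c t"
    unfolding tail_rate_def sum_distrib_left
    by (intro sum.cong) (simp_all add: algebra_simps flip: exp_add)
  finally show ?thesis .
qed

text \<open>Blocks outside the run \<open>lead_blocks j\<close> either vanish (above the leading block) or grow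
  strictly slower than the leading block.\<close>

lemma tail_rate_tendsto_0:
  assumes j: "j \<in> {1..r}" and c: "c \<in> cols j"
  shows "(tail_rate j c \<longlongrightarrow> 0) at_top"
  unfolding tail_rate_def[abs_def]
proof (rule tendsto_null_sum)
  fix i assume i: "i \<in> {1..k} - lead_blocks j"
  show "((\<lambda>t. expA_const * exp (t * (\<beta> i - lead_rate j)) * norm (blk i (w c))) \<longlongrightarrow> 0) at_top"
  proof (cases "i \<le> kk j")
    case True
    then have "blk i (w c) = 0" using w j c i unfolding echelon_family_def by auto
    then show ?thesis by simp
  next
    case False
    then have "\<beta> i - lead_rate j < 0"
      using beta_less_lead_rate[OF j] i unfolding lead_blocks_def by auto
    from tendsto_mult_right_zero[OF tendsto_mult_left_zero[OF exp_mult_tendsto_0[OF this]]]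
    show ?thesis by (simp add: mult_ac)
  qed
qed

definition tail_bound :: "real \<Rightarrow> real" where
  "tail_bound t = (\<Sum>j\<in>{1..r}. \<Sum>c\<in>cols j. tail_rate j c t)"

lemma tail_bound_nonneg: "0 \<le> tail_bound t"
  unfolding tail_bound_def by (intro sum_nonneg tail_rate_nonneg)

lemma tail_rate_le_tail_bound: "j \<in> {1..r} \<Longrightarrow> c \<in> cols j \<Longrightarrow> tail_rate j c t \<le> tail_bound t"
  unfolding tail_bound_def using tail_rate_nonneg
  by (intro order_trans[OF _ member_le_sum[of j]] member_le_sum sum_nonneg) (auto simp: cols_def)

lemma tail_bound_tendsto_0: "(tail_bound \<longlongrightarrow> 0) at_top"
  unfolding tail_bound_def[abs_def] by (intro tendsto_null_sum tail_rate_tendsto_0) auto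

lemma norm_expA_diff_le:
  "norm (expA t *v (\<Sum>c<s. a c *\<^sub>R w c) - expA t *v (\<Sum>c<s. a c *\<^sub>R winfty c))
    \<le> tail_bound t * weighted_coeffs a t"
proof -
  have "expA t *v (\<Sum>c<s. a c *\<^sub>R w c) - expA t *v (\<Sum>c<s. a c *\<^sub>R winfty c)
      = (\<Sum>c<s. a c *\<^sub>R (expA t *v (w c - winfty c)))"
    by (simp add: expA_sum matrix_vector_mult_scaleR matrix_vector_mult_diff_distrib
        scaleR_diff_right sum_subtractf)
  then have "norm (expA t *v (\<Sum>c<s. a c *\<^sub>R w c) - expA t *v (\<Sum>c<s. a c *\<^sub>R winfty c))
      \<le> (\<Sum>j\<in>{1..r}. \<Sum>c\<in>cols j. \<bar>a c\<bar> * norm (expA t *v (w c - winfty c)))"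
    using norm_sum[of "\<lambda>c. a c *\<^sub>R (expA t *v (w c - winfty c))" "{..<s}"]
    by (simp add: sum_lessThan_cols)
  also have "\<dots> \<le> (\<Sum>j\<in>{1..r}. \<Sum>c\<in>cols j. \<bar>a c\<bar> * (exp (t * lead_rate j) * tail_bound t))"
  proof (intro sum_mono mult_left_mono)
    fix j c assume j: "j \<in> {1..r}" and c: "c \<in> cols j"
    show "norm (expA t *v (w c - winfty c)) \<le> exp (t * lead_rate j) * tail_bound t"
      using norm_expA_tail_le[OF j c, of t] tail_rate_le_tail_bound[OF j c, of t]
      by (meson exp_ge_zero mult_left_mono order_trans)
  qed simp
  also have "\<dots> = tail_bound t * weighted_coeffs a t"
    unfolding weighted_coeffs_def by (simp add: sum_distrib_left mult_ac)
  finally show ?thesis .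
qed

lemma norm_expA_diff_le_rel:
  assumes "weighted_coeffs a t \<le> C * norm v" and "C \<le> C'"
  shows "norm (expA t *v (\<Sum>c<s. a c *\<^sub>R w c) - expA t *v (\<Sum>c<s. a c *\<^sub>R winfty c))
    \<le> C' * tail_bound t * norm v"
proof -
  have "weighted_coeffs a t \<le> C' * norm v"
    using assms by (meson mult_right_mono norm_ge_zero order_trans)
  from order_trans[OF norm_expA_diff_le mult_left_mono[OF this tail_bound_nonneg]]
  show ?thesis by (simp add: mult_ac)
qed

text \<open>Under \<open>e\<^sup>t\<^sup>A\<close>, corresponding elements \<open>W a\<close> and \<open>W\<^sup>\<infinity> a\<close> are relatively close, because
  \<open>\<parallel>e\<^sup>t\<^sup>A W a\<parallel>\<close> and \<open>\<parallel>e\<^sup>t\<^sup>A W\<^sup>\<infinity> a\<parallel>\<close> both dominate the weighted coefficients of \<open>a\<close>.\<close>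

lemma expA_images_close:
  obtains \<theta> where "(\<theta> \<longlongrightarrow> 0) at_top" "\<And>t. 0 \<le> \<theta> t"
    "\<And>t v. 0 \<le> t \<Longrightarrow> v \<in> span (w ` {..<s}) \<Longrightarrow>
      \<exists>v'\<in>span (winfty ` {..<s}). norm (expA t *v v - expA t *v v') \<le> \<theta> t * norm (expA t *v v)"
    "\<And>t v. 0 \<le> t \<Longrightarrow> v \<in> span (winfty ` {..<s}) \<Longrightarrow>
      \<exists>v'\<in>span (w ` {..<s}). norm (expA t *v v - expA t *v v') \<le> \<theta> t * norm (expA t *v v)"
proof -
  obtain C1 where C1: "0 \<le> C1"
    "\<And>t a. 0 \<le> t \<Longrightarrow> weighted_coeffs a t \<le> C1 * norm (expA t *v (\<Sum>c<s. a c *\<^sub>R w c))"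
    using weighted_coeffs_le_expA[OF w] by blast
  obtain C2 where C2: "0 \<le> C2"
    "\<And>t a. 0 \<le> t \<Longrightarrow> weighted_coeffs a t \<le> C2 * norm (expA t *v (\<Sum>c<s. a c *\<^sub>R winfty c))"
    using weighted_coeffs_le_expA[OF echelon_family_winfty] by blast
  define \<theta> where "\<theta> t = (C1 + C2) * tail_bound t" for t
  show thesis
  proof
    show "(\<theta> \<longlongrightarrow> 0) at_top"
      unfolding \<theta>_def[abs_def] by (rule tendsto_mult_right_zero[OF tail_bound_tendsto_0])
    show "0 \<le> \<theta> t" for t unfolding \<theta>_def using C1 C2 tail_bound_nonneg by simp
  next
    fix t :: real and v assume t: "0 \<le> t" and "v \<in> span (w ` {..<s})"
    then obtain a where v: "v = (\<Sum>c<s. a c *\<^sub>R w c)"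
      using span_image_lessThanE[OF echelon_family_independent(1)[OF w]] by blast
    have "(\<Sum>c<s. a c *\<^sub>R winfty c) \<in> span (winfty ` {..<s})"
      by (intro span_sum span_scale span_base) auto
    then show "\<exists>v'\<in>span (winfty ` {..<s}). norm (expA t *v v - expA t *v v') \<le> \<theta> t * norm (expA t *v v)"
      unfolding v \<theta>_def using norm_expA_diff_le_rel[OF C1(2)[OF t, of a], of "C1 + C2"] C2(1) by auto
  next
    fix t :: real and v assume t: "0 \<le> t" and "v \<in> span (winfty ` {..<s})"
    then obtain a where v: "v = (\<Sum>c<s. a c *\<^sub>R winfty c)"
      using span_image_lessThanE[OF echelon_family_independent(1)[OF echelon_family_winfty]] by blast
    have "(\<Sum>c<s. a c *\<^sub>R w c) \<in> span (w ` {..<s})"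
      by (intro span_sum span_scale span_base) auto
    then show "\<exists>v'\<in>span (w ` {..<s}). norm (expA t *v v - expA t *v v') \<le> \<theta> t * norm (expA t *v v)"
      unfolding v \<theta>_def using norm_expA_diff_le_rel[OF C2(2)[OF t, of a], of "C1 + C2"] C1(1)
      by (auto simp: norm_minus_commute)
  qed
qed

lemma onorm_oproj_expA_tendsto_0:
  "((\<lambda>t. onorm (\<lambda>x. oproj ((\<lambda>v. expA t *v v) ` span (w ` {..<s})) x
      - oproj ((\<lambda>v. expA t *v v) ` span (winfty ` {..<s})) x)) \<longlongrightarrow> 0) at_top"
proof -
  obtain \<theta> where \<theta>: "(\<theta> \<longlongrightarrow> 0) at_top" "\<And>t. 0 \<le> \<theta> t"
    and close1: "\<And>t v. 0 \<le> t \<Longrightarrow> v \<in> span (w ` {..<s}) \<Longrightarrow>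
      \<exists>v'\<in>span (winfty ` {..<s}). norm (expA t *v v - expA t *v v') \<le> \<theta> t * norm (expA t *v v)"
    and close2: "\<And>t v. 0 \<le> t \<Longrightarrow> v \<in> span (winfty ` {..<s}) \<Longrightarrow>
      \<exists>v'\<in>span (w ` {..<s}). norm (expA t *v v - expA t *v v') \<le> \<theta> t * norm (expA t *v v)"
    using expA_images_close by blast
  let ?E = "\<lambda>t V. (\<lambda>v. expA t *v v) ` span V"
  have sub: "subspace (?E t V)" for t V
    by (rule linear_subspace_image[OF matrix_vector_mul_linear subspace_span])
  have "\<forall>\<^sub>F t in at_top. norm (onorm (\<lambda>x. oproj (?E t (w ` {..<s})) x - oproj (?E t (winfty ` {..<s})) x))
      \<le> 2 * \<theta> t"
    using eventually_ge_at_top[of "0::real"]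
  proof eventually_elim
    case (elim t)
    have "onorm (\<lambda>x. oproj (?E t (w ` {..<s})) x - oproj (?E t (winfty ` {..<s})) x) \<le> 2 * \<theta> t"
      using sub \<theta>(2) close1[OF elim] close2[OF elim] by (intro onorm_oproj_diff_le) auto
    then show ?case using onorm_oproj_diff_nonneg[OF sub sub] by simp
  qed
  from Lim_null_comparison[OF this tendsto_mult_right_zero[OF \<theta>(1)]] show ?thesis .
qed

end

theorem lemma4p10:
  fixes idx :: "'n::finite \<Rightarrow> nat"
    and k :: nat and dz :: "nat \<Rightarrow> nat"
    and \<beta> \<omega> \<rho> :: "nat \<Rightarrow> real"
    and V :: "(real^'n) set" and s :: nat
    and w :: "nat \<Rightarrow> real^'n" and r :: nat and b kk :: "nat \<Rightarrow> nat"
  assumes idx: "bij_betw idx UNIV {..<CARD('n)}"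
    and dz: "\<forall>j\<in>{1..k}. dz j \<in> {1,2}"
    and dsum: "(\<Sum>j\<in>{1..k}. dz j) = CARD('n)"
    and cplx: "\<forall>j\<in>{1..k}. dz j = 2 \<longrightarrow> \<omega> j > 0 \<and> 0 < \<rho> j \<and> \<rho> j \<le> 1"
    and mono: "\<forall>i j. 1 \<le> i \<and> i \<le> j \<and> j \<le> k \<longrightarrow> \<beta> j \<le> \<beta> i"
    and C: "\<forall>j\<in>{1..k}. dz j = 2 \<longrightarrow> (\<forall>\<nu>\<in>{1..k}. \<nu> \<noteq> j \<longrightarrow> \<beta> j \<noteq> \<beta> \<nu>)"
    and V: "V \<in> grassmannian s"
    and W: "block_col_echelon idx k dz V s w r b kk"
  shows "span (winf idx k dz \<beta> w r b kk ` {..<s}) \<in> grassmannian s \<and>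
    ((\<lambda>t::real. onorm (\<lambda>x.
        oproj ((\<lambda>v. mexp (t *\<^sub>R blockA idx k dz \<beta> \<omega> \<rho>) *v v) ` V) x
      - oproj ((\<lambda>v. mexp (t *\<^sub>R blockA idx k dz \<beta> \<omega> \<rho>) *v v) ` span (winf idx k dz \<beta> w r b kk ` {..<s})) x))
     \<longlongrightarrow> 0) at_top"
proof -
  have span_w: "span (w ` {..<s}) = V"
    using W unfolding block_col_echelon_def by blast
  interpret block_echelon idx k dz \<beta> \<omega> \<rho> s r b kk
    using idx dz dsum cplx mono W by unfold_locales (auto simp: block_col_echelon_def)
  have "echelon_family w"
    using W unfolding block_col_echelon_def echelon_family_def cols_def by blast
  then interpret echelon_basis idx k dz \<beta> \<omega> \<rho> s r b kk w
    by unfold_locales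
  note indep = echelon_family_independent[OF echelon_family_winfty]
  have "dim (span (winfty ` {..<s})) = card (winfty ` {..<s})"
    by (rule dim_span_eq_card_independent[OF indep(2)])
  then have "span (winfty ` {..<s}) \<in> grassmannian s"
    using card_image[OF indep(1)] by (simp add: grassmannian_def)
  with onorm_oproj_expA_tendsto_0 show ?thesis
    unfolding span_w expA_def by simp
qed

end
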